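(* The Margolis homology groups $M_*(S';Q_0)$ and $M_*(S';Q_1)$ are both trivial. Consequently, $S'$ is a free $E(1)$-module.
   Context: Let $p$ be an odd prime and $(A/\!/E(2))_*=\mathbb{F}_p[\zeta_1,\zeta_2,\ldots]\otimes E(\overline{\tau}_3,\overline{\tau}_4,\ldots)$ (subalgebra of the mod $p$ dual Steenrod algebra; $\zeta_n,\overline{\tau}_n$ are the conjugates of Milnor's $\xi_n,\tau_n$, of degrees $2(p^n-1)$ and $2p^n-1$). It is a module over $E(2)=E(Q_0,Q_1,Q_2)$ (Milnor primitives), each $Q_i$ acting as a graded derivation with $Q_i\zeta_n=0$ and, for $k\geq1$, $Q_0\overline{\tau}_{2+k}=\zeta_{2+k}$, $Q_1\overline{\tau}_{2+k}=\zeta_{1+k}^p$, $Q_2\overline{\tau}_{2+k}=\zeta_k^{p^2}$. The length of a monomial is the number of $\overline{\tau}_n$'s in it. Let $S$ be the $E(2)$-submodule generated by monomials of length $\geq3$ and $Q=(A/\!/E(2))_*/S$, with the length filtration induced from $(A/\!/E(2))_*$ (so elements of $Q$ have lengths $0,1,2$). Let $E(1)=E(Q_0,Q_1)\subseteq E(2)$ and let $S'$ be the $E(1)$-submodule of $Q$ generated by the elements of length $2$. Margolis homology is $M_*(N;Q_i)=\ker(Q_i)/\operatorname{im}(Q_i)$. *)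

theory Defs
  imports Main "HOL-Library.Function_Algebras" "Berlekamp_Zassenhaus.Finite_Field"
begin

text \<open>A monomial zeta_1^(e 1) zeta_2^(e 2) ... taubar_{t1} ... taubar_{tk} (t1 < ... < tk)
 is encoded as the pair (e, T) with T = {t1,...,tk}.\<close>
type_synonym mon = "(nat \<Rightarrow> nat) \<times> nat set"

definition valid_mon :: "mon \<Rightarrow> bool" where
  "valid_mon m \<longleftrightarrow> finite {n. fst m n \<noteq> 0} \<and> fst m 0 = 0 \<and> finite (snd m) \<and> snd m \<subseteq> {3..}"

definition mlen :: "mon \<Rightarrow> nat" where
  "mlen m = card (snd m)"

definition mdeg :: "nat \<Rightarrow> mon \<Rightarrow> nat" where
  "mdeg p m = (\<Sum>n\<in>{n. fst m n \<noteq> 0}. fst m n * (2 * (p ^ n - 1))) + (\<Sum>n\<in>snd m. 2 * p ^ n - 1)"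

text \<open>Elements of (A//E(2))_* are finitely supported coefficient functions mon => F_p.\<close>
definition basis_vec :: "mon \<Rightarrow> mon \<Rightarrow> 'a::comm_ring_1" where
  "basis_vec m = (\<lambda>m'. if m' = m then 1 else 0)"

definition smul :: "'a::comm_ring_1 \<Rightarrow> (mon \<Rightarrow> 'a) \<Rightarrow> (mon \<Rightarrow> 'a)" where
  "smul c f = (\<lambda>m. c * f m)"

definition homogeneous :: "nat \<Rightarrow> (mon \<Rightarrow> 'a::comm_ring_1) \<Rightarrow> bool" where
  "homogeneous p f \<longleftrightarrow> (\<exists>d. \<forall>m. f m \<noteq> 0 \<longrightarrow> mdeg p m = d)"

text \<open>Q_j on a monomial, as a graded derivation with Q_j zeta_n = 0 and
 Q_j taubar_n = zeta_{n-j}^{p^j} (n >= 3, j <= 2); the sign (-1)^r comes from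
 moving Q_j past the r taubar's preceding taubar_t.\<close>
definition Qmon :: "nat \<Rightarrow> nat \<Rightarrow> mon \<Rightarrow> (mon \<Rightarrow> 'a::comm_ring_1)" where
  "Qmon p j m = (\<Sum>t\<in>snd m. smul ((-1) ^ card {s\<in>snd m. s < t})
      (basis_vec ((fst m)(t - j := fst m (t - j) + p ^ j), snd m - {t})))"

definition Qop :: "nat \<Rightarrow> nat \<Rightarrow> (mon \<Rightarrow> 'a::comm_ring_1) \<Rightarrow> (mon \<Rightarrow> 'a)" where
  "Qop p j f = (\<Sum>m\<in>{m. f m \<noteq> 0}. smul (f m) (Qmon p j m))"

definition Qseq :: "nat \<Rightarrow> nat set \<Rightarrow> (mon \<Rightarrow> 'a::comm_ring_1) \<Rightarrow> (mon \<Rightarrow> 'a)" where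
  "Qseq p I f = foldr (Qop p) (sorted_list_of_set I) f"

definition Ssub :: "nat \<Rightarrow> (mon \<Rightarrow> 'a::comm_ring_1) set" where
  "Ssub p = module.span smul
     {Qseq p I (basis_vec m) | I m. I \<subseteq> {0,1,2} \<and> valid_mon m \<and> 3 \<le> mlen m}"

text \<open>Preimage in (A//E(2))_* of S' (the E(1)-submodule of Q = A/S generated by
 the classes of the length-2 monomials); so S' = Sprime_pre p / Ssub p.\<close>
definition Sprime_pre :: "nat \<Rightarrow> (mon \<Rightarrow> 'a::comm_ring_1) set" where
  "Sprime_pre p = module.span smul
     ({Qseq p I (basis_vec m) | I m. I \<subseteq> {0,1} \<and> valid_mon m \<and> mlen m = 2} \<union> Ssub p)"

text \<open>M_*(W/S; Q_i) = 0, i.e. ker Q_i = im Q_i on the subquotient W/S.\<close>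
definition margolis_trivial :: "nat \<Rightarrow> nat \<Rightarrow> (mon \<Rightarrow> 'a::comm_ring_1) set \<Rightarrow> (mon \<Rightarrow> 'a) set \<Rightarrow> bool" where
  "margolis_trivial p i W S \<longleftrightarrow>
     (\<forall>x\<in>W. Qop p i x \<in> S \<longrightarrow> (\<exists>y\<in>W. x - Qop p i y \<in> S))"

text \<open>W/S is a free (graded) E(1)-module: there are homogeneous b in W whose classes
 form an E(1)-basis, i.e. the classes of Q^I b (b in B, I subset of {0,1}) are
 linearly independent and span W/S.\<close>
definition E1_free :: "nat \<Rightarrow> (mon \<Rightarrow> 'a::comm_ring_1) set \<Rightarrow> (mon \<Rightarrow> 'a) set \<Rightarrow> bool" where
  "E1_free p W S \<longleftrightarrow> (\<exists>B. B \<subseteq> W \<and> (\<forall>b\<in>B. homogeneous p b) \<and>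
     W \<subseteq> module.span smul ({Qseq p I b | I b. I \<subseteq> {0,1} \<and> b \<in> B} \<union> S) \<and>
     (\<forall>c F. finite F \<and> F \<subseteq> B \<times> Pow {0,1} \<and>
        (\<Sum>(b,I)\<in>F. smul (c (b,I)) (Qseq p I b)) \<in> S \<longrightarrow> (\<forall>x\<in>F. c x = 0)))"

end

theory Submission
  imports Defs
begin

(* The Q_j act on the monomial basis as anticommuting derivations with Q_j^2 = 0 (p is odd).
   On monomials containing some taubar, Q_j has a Koszul-type contracting homotopy H_j, so
   Q_j-cycles of positive length are Q_j-boundaries.  Combined with an induction on the
   internal degree (H_0 Q_1 lowers it), this shows that a Q_0 Q_1-cycle of length 2 is
   Q_0 a + Q_1 b with a, b of length 3.  Since the length-0 part of S is Q_0 Q_1 Q_2 applied to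
   length 3, it follows that a length-2 element x lies in S as soon as Q_0 Q_1 x does.
   Every element of the preimage of S' is a + Q_0 b + Q_1 c + Q_0 Q_1 d modulo S with a, b, c, d
   of length 2, and S is spanned by length-homogeneous generators, so comparing lengths and
   applying this criterion gives both the vanishing of the Margolis homology and the
   E(1)-freeness on a set of length-2 monomials complementing S. *)

section \<open>Finitely supported vectors\<close>

interpretation fun_module: Modules.module "smul :: 'a::comm_ring_1 \<Rightarrow> (mon \<Rightarrow> 'a) \<Rightarrow> _"
  by unfold_locales (auto simp: smul_def fun_eq_iff algebra_simps)

interpretation fun_vector_space: Vector_Spaces.vector_space "smul :: 'a::field \<Rightarrow> (mon \<Rightarrow> 'a) \<Rightarrow> _"
  by unfold_locales (auto simp: smul_def fun_eq_iff algebra_simps)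

lemma sum_fun_apply: "(\<Sum>i\<in>A. F i) x = (\<Sum>i\<in>A. F i x)"
  by (induct A rule: infinite_finite_induct) auto

lemma smul_apply: "smul c f m = c * f m"
  by (simp add: smul_def)

definition supp :: "(mon \<Rightarrow> 'a::comm_ring_1) \<Rightarrow> mon set" where
  "supp f = {m. f m \<noteq> 0}"

definition fin_supp :: "(mon \<Rightarrow> 'a::comm_ring_1) \<Rightarrow> bool" where
  "fin_supp f \<longleftrightarrow> finite (supp f)"

lemma supp_basis_vec: "supp (basis_vec m :: mon \<Rightarrow> 'a::comm_ring_1) = {m}"
  by (simp add: supp_def basis_vec_def)

lemma supp_smul: "supp (smul c f) \<subseteq> supp f"
  by (auto simp: supp_def smul_apply)

lemma supp_sum: "supp (\<Sum>i\<in>A. F i) \<subseteq> (\<Union>i\<in>A. supp (F i))"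
  by (induct A rule: infinite_finite_induct) (auto simp: supp_def)

lemma fin_supp_mono: "fin_supp g \<Longrightarrow> supp f \<subseteq> supp g \<Longrightarrow> fin_supp f"
  unfolding fin_supp_def by (rule finite_subset)

lemma fin_supp_zero [simp]: "fin_supp 0"
  and fin_supp_basis_vec [simp]: "fin_supp (basis_vec m)"
  by (simp_all add: fin_supp_def supp_def basis_vec_def)

lemma fin_supp_add [simp]: "fin_supp f \<Longrightarrow> fin_supp g \<Longrightarrow> fin_supp (f + g)"
  and fin_supp_diff [simp]: "fin_supp f \<Longrightarrow> fin_supp g \<Longrightarrow> fin_supp (f - g)"
  unfolding fin_supp_def supp_def
  by (rule finite_subset[of _ "{m. f m \<noteq> 0} \<union> {m. g m \<noteq> 0}"]; auto)+

lemma fin_supp_neg [simp]: "fin_supp f \<Longrightarrow> fin_supp (- f)"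
  by (simp add: fin_supp_def supp_def)

lemma fin_supp_smul [simp]: "fin_supp f \<Longrightarrow> fin_supp (smul c f)"
  using fin_supp_mono supp_smul by blast

lemma fin_supp_sum: "(\<And>i. i \<in> A \<Longrightarrow> fin_supp (F i)) \<Longrightarrow> fin_supp (\<Sum>i\<in>A. F i)"
  by (induct A rule: infinite_finite_induct) auto

lemma fin_supp_expansion:
  assumes "fin_supp f"
  shows "f = (\<Sum>m\<in>supp f. smul (f m) (basis_vec m))"
proof
  fix m'
  have "(\<Sum>m\<in>supp f. smul (f m) (basis_vec m)) m' = (\<Sum>m\<in>supp f. f m * (if m' = m then 1 else 0))"
    by (simp add: sum_fun_apply basis_vec_def smul_apply)
  also have "\<dots> = f m'"
    using assms by (auto simp: fin_supp_def supp_def if_distrib sum.If_cases cong: if_cong)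
  finally show "f m' = (\<Sum>m\<in>supp f. smul (f m) (basis_vec m)) m'" by simp
qed

lemma fin_supp_span:
  assumes "\<And>g. g \<in> G \<Longrightarrow> fin_supp g" "x \<in> module.span smul G"
  shows "fin_supp x"
  by (rule fun_module.span_induct_alt[OF assms(2), where h = fin_supp]) (simp_all add: assms(1))

text \<open>An operator is only required to be linear on finitely supported vectors, since
  operators given on monomials are extended by finite sums.\<close>

definition fs_linear :: "((mon \<Rightarrow> 'a::comm_ring_1) \<Rightarrow> (mon \<Rightarrow> 'a)) \<Rightarrow> bool" where
  "fs_linear \<Phi> \<longleftrightarrow> (\<forall>x. fin_supp x \<longrightarrow> fin_supp (\<Phi> x)) \<and>
     (\<forall>c x y. fin_supp x \<longrightarrow> fin_supp y \<longrightarrow> \<Phi> (smul c x + y) = smul c (\<Phi> x) + \<Phi> y)"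

definition lin_ext :: "(mon \<Rightarrow> (mon \<Rightarrow> 'a::comm_ring_1)) \<Rightarrow> (mon \<Rightarrow> 'a) \<Rightarrow> (mon \<Rightarrow> 'a)" where
  "lin_ext G f = (\<Sum>m\<in>supp f. smul (f m) (G m))"

lemma Qop_eq_lin_ext: "Qop p j = lin_ext (Qmon p j)"
  by (simp add: fun_eq_iff Qop_def lin_ext_def supp_def)

lemma lin_ext_eq_sum:
  assumes "finite A" "supp f \<subseteq> A"
  shows "lin_ext G f = (\<Sum>m\<in>A. smul (f m) (G m))"
  unfolding lin_ext_def using assms by (intro sum.mono_neutral_left) (auto simp: supp_def)

lemma lin_ext_basis_vec [simp]: "lin_ext G (basis_vec m) = G m"
  by (subst lin_ext_eq_sum[of "{m}"]) (auto simp: supp_def basis_vec_def)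

lemma supp_lin_ext: "supp (lin_ext G f) \<subseteq> (\<Union>m\<in>supp f. supp (G m))"
  unfolding lin_ext_def using supp_sum supp_smul by fastforce

lemma fs_linear_lin_ext:
  assumes "\<And>m. fin_supp (G m)"
  shows "fs_linear (lin_ext G)"
  unfolding fs_linear_def
proof (intro conjI allI impI)
  fix x :: "mon \<Rightarrow> 'a" assume "fin_supp x"
  then show "fin_supp (lin_ext G x)"
    unfolding lin_ext_def by (intro fin_supp_sum fin_supp_smul assms)
next
  fix c and x y :: "mon \<Rightarrow> 'a" assume "fin_supp x" "fin_supp y"
  then have A: "finite (supp x \<union> supp y)" by (simp add: fin_supp_def)
  have "supp (smul c x + y) \<subseteq> supp x \<union> supp y" by (auto simp: supp_def smul_apply)
  then have "lin_ext G (smul c x + y) =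
      (\<Sum>m\<in>supp x \<union> supp y. smul c (smul (x m) (G m)) + smul (y m) (G m))"
    by (simp add: lin_ext_eq_sum[OF A] smul_apply fun_module.scale_left_distrib)
  also have "\<dots> = smul c (lin_ext G x) + lin_ext G y"
    by (simp add: lin_ext_eq_sum[OF A] sum.distrib fun_module.scale_sum_right supp_def)
  finally show "lin_ext G (smul c x + y) = smul c (lin_ext G x) + lin_ext G y" .
qed

lemma fs_linear_fin_supp: "fs_linear \<Phi> \<Longrightarrow> fin_supp x \<Longrightarrow> fin_supp (\<Phi> x)"
  by (simp add: fs_linear_def)

lemma fs_linear_zero:
  assumes "fs_linear \<Phi>"
  shows "\<Phi> 0 = 0"
proof -
  have "\<Phi> (smul (-1) 0 + 0) = smul (-1) (\<Phi> 0) + \<Phi> 0"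
    using assms fin_supp_zero unfolding fs_linear_def by blast
  then show ?thesis by simp
qed

lemma fs_linear_add: "fs_linear \<Phi> \<Longrightarrow> fin_supp x \<Longrightarrow> fin_supp y \<Longrightarrow> \<Phi> (x + y) = \<Phi> x + \<Phi> y"
  unfolding fs_linear_def by (metis fun_module.scale_one)

lemma fs_linear_smul:
  assumes "fs_linear \<Phi>" "fin_supp x"
  shows "\<Phi> (smul c x) = smul c (\<Phi> x)"
  using assms fs_linear_zero[OF assms(1)] unfolding fs_linear_def
  by (metis fin_supp_zero add_0_right)

lemma fs_linear_neg: "fs_linear \<Phi> \<Longrightarrow> fin_supp x \<Longrightarrow> \<Phi> (- x) = - \<Phi> x"
  using fs_linear_smul[of \<Phi> x "-1"] by simp

lemma fs_linear_diff: "fs_linear \<Phi> \<Longrightarrow> fin_supp x \<Longrightarrow> fin_supp y \<Longrightarrow> \<Phi> (x - y) = \<Phi> x - \<Phi> y"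
  using fs_linear_add[of \<Phi> x "- y"] fs_linear_neg[of \<Phi> y] by simp

lemma fs_linear_sum:
  assumes "fs_linear \<Phi>" "\<And>i. i \<in> A \<Longrightarrow> fin_supp (F i)"
  shows "\<Phi> (\<Sum>i\<in>A. F i) = (\<Sum>i\<in>A. \<Phi> (F i))"
  using assms(2)
  by (induct A rule: infinite_finite_induct)
     (simp_all add: fs_linear_zero[OF assms(1)] fs_linear_add[OF assms(1)] fin_supp_sum)

lemma fs_linear_id: "fs_linear (\<lambda>x. x)"
  by (simp add: fs_linear_def)

lemma fs_linear_comp: "fs_linear \<Phi> \<Longrightarrow> fs_linear \<Psi> \<Longrightarrow> fs_linear (\<lambda>x. \<Phi> (\<Psi> x))"
  unfolding fs_linear_def by auto

lemma fs_linear_uminus: "fs_linear \<Phi> \<Longrightarrow> fs_linear (\<lambda>x. - \<Phi> x)"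
  unfolding fs_linear_def by auto

lemma fs_linear_plus: "fs_linear \<Phi> \<Longrightarrow> fs_linear \<Psi> \<Longrightarrow> fs_linear (\<lambda>x. \<Phi> x + \<Psi> x)"
  unfolding fs_linear_def by (auto simp: fun_module.scale_right_distrib)

lemma fs_linear_expansion:
  assumes "fs_linear \<Phi>" "fin_supp f"
  shows "\<Phi> f = (\<Sum>m\<in>supp f. smul (f m) (\<Phi> (basis_vec m)))"
  by (subst fin_supp_expansion[OF assms(2)], subst fs_linear_sum[OF assms(1)])
     (auto simp: fs_linear_smul[OF assms(1)])

lemma fs_linear_eqI:
  assumes "fs_linear \<Phi>" "fs_linear \<Psi>" "fin_supp f"
    and "\<And>m. m \<in> supp f \<Longrightarrow> \<Phi> (basis_vec m) = \<Psi> (basis_vec m)"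
  shows "\<Phi> f = \<Psi> f"
  using fs_linear_expansion[OF assms(1,3)] fs_linear_expansion[OF assms(2,3)] assms(4)
  by (auto intro!: sum.cong)

lemma fs_linear_span:
  assumes "fs_linear \<Phi>" "\<And>g. g \<in> G \<Longrightarrow> fin_supp g"
    and "\<And>g. g \<in> G \<Longrightarrow> \<Phi> g \<in> module.span smul G'" and "x \<in> module.span smul G"
  shows "\<Phi> x \<in> module.span smul G'"
proof -
  have "fin_supp x \<and> \<Phi> x \<in> module.span smul G'"
  proof (rule fun_module.span_induct_alt[OF assms(4)])
    show "fin_supp 0 \<and> \<Phi> 0 \<in> module.span smul G'"
      by (simp add: fs_linear_zero[OF assms(1)] fun_module.span_zero)
  next
    fix c x y assume "x \<in> G" "fin_supp y \<and> \<Phi> y \<in> module.span smul G'"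
    then show "fin_supp (smul c x + y) \<and> \<Phi> (smul c x + y) \<in> module.span smul G'"
      using assms(1-3) by (simp add: fs_linear_def fun_module.span_add fun_module.span_scale)
  qed
  then show ?thesis ..
qed

section \<open>The operators \<open>Q\<^sub>j\<close>\<close>

definition zeta_mult :: "nat \<Rightarrow> nat \<Rightarrow> (nat \<Rightarrow> nat) \<Rightarrow> nat \<Rightarrow> (nat \<Rightarrow> nat)" where
  "zeta_mult p j e t = e(t - j := e (t - j) + p ^ j)"

definition koszul_sign :: "nat set \<Rightarrow> nat \<Rightarrow> 'a::comm_ring_1" where
  "koszul_sign T t = (-1) ^ card {s\<in>T. s < t}"

lemma Qmon_eq:
  "Qmon p j (e, T) = (\<Sum>t\<in>T. smul (koszul_sign T t) (basis_vec (zeta_mult p j e t, T - {t})))"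
  by (simp add: Qmon_def zeta_mult_def koszul_sign_def)

lemma fin_supp_Qmon [simp]: "fin_supp (Qmon p j m)"
  by (cases m) (simp add: Qmon_eq fin_supp_sum)

lemma fs_linear_Qop: "fs_linear (Qop p j)"
  unfolding Qop_eq_lin_ext by (rule fs_linear_lin_ext) simp

lemma Qop_basis_vec [simp]: "Qop p j (basis_vec m) = Qmon p j m"
  by (simp add: Qop_eq_lin_ext)

lemma fin_supp_Qop [simp]: "fin_supp f \<Longrightarrow> fin_supp (Qop p j f)"
  by (rule fs_linear_fin_supp[OF fs_linear_Qop])

lemma sum_offdiag_swap:
  assumes "finite T"
  shows "(\<Sum>t\<in>T. \<Sum>s\<in>T - {t}. F t s) = (\<Sum>s\<in>T. \<Sum>t\<in>T - {s}. F t s)"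
proof -
  have "(\<Sum>t\<in>T. \<Sum>s\<in>T - {t}. F t s) = (\<Sum>t\<in>T. \<Sum>s | s \<in> T \<and> t \<noteq> s. F t s)"
    by (intro sum.cong) auto
  also have "\<dots> = (\<Sum>s\<in>T. \<Sum>t | t \<in> T \<and> t \<noteq> s. F t s)"
    by (rule sum.swap_restrict[OF assms assms])
  also have "\<dots> = (\<Sum>s\<in>T. \<Sum>t\<in>T - {s}. F t s)"
    by (intro sum.cong) auto
  finally show ?thesis .
qed

lemma koszul_sign_remove:
  assumes "finite T" "a < b" "a \<in> T"
  shows "(koszul_sign (T - {b}) a :: 'a::comm_ring_1) = koszul_sign T a"
    and "(koszul_sign (T - {a}) b :: 'a::comm_ring_1) = - koszul_sign T b"
proof -
  have "{s\<in>T - {b}. s < a} = {s\<in>T. s < a}" using assms by auto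
  then show "koszul_sign (T - {b}) a = koszul_sign T a" by (simp add: koszul_sign_def)
  have "{s\<in>T. s < b} = insert a {s\<in>T - {a}. s < b}" using assms by auto
  then have "card {s\<in>T. s < b} = Suc (card {s\<in>T - {a}. s < b})"
    using assms(1) by simp
  then show "(koszul_sign (T - {a}) b :: 'a) = - koszul_sign T b"
    by (simp add: koszul_sign_def)
qed

lemma koszul_sign_swap:
  assumes "finite T" "a \<in> T" "b \<in> T" "a \<noteq> b"
  shows "(koszul_sign T b * koszul_sign (T - {b}) a :: 'a::comm_ring_1) =
    - (koszul_sign T a * koszul_sign (T - {a}) b)"
proof (cases "a < b")
  case True
  then show ?thesis
    using koszul_sign_remove[OF assms(1) True assms(2), where 'a = 'a] by (simp add: mult.commute)
next
  case False
  then have "b < a" using assms(4) by simp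
  then show ?thesis
    using koszul_sign_remove[OF assms(1) _ assms(3), of a, where 'a = 'a] by (simp add: mult.commute)
qed

lemma zeta_mult_commute: "zeta_mult p i (zeta_mult p j e t) s = zeta_mult p j (zeta_mult p i e s) t"
  by (auto simp: zeta_mult_def fun_eq_iff)

lemma Qop_Qmon_anticommute: "Qop p i (Qmon p j m) = - Qop p j (Qmon p i m)"
proof (cases m)
  case (Pair e T)
  show ?thesis
  proof (cases "finite T")
    case False
    then show ?thesis by (simp add: Pair Qmon_eq fs_linear_zero[OF fs_linear_Qop])
  next
    case fin: True
    define F where "F i j t s = (smul (koszul_sign T t * koszul_sign (T - {t}) s)
      (basis_vec (zeta_mult p i (zeta_mult p j e t) s, T - {t} - {s})) :: mon \<Rightarrow> 'a)" for i j t s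
    have expand: "Qop p i (Qmon p j (e, T)) = (\<Sum>t\<in>T. \<Sum>s\<in>T - {t}. F i j t s)" for i j
      by (simp add: Qmon_eq F_def fs_linear_sum[OF fs_linear_Qop] fs_linear_smul[OF fs_linear_Qop]
          fun_module.scale_sum_right)
    have "(\<Sum>t\<in>T. \<Sum>s\<in>T - {t}. F j i t s) = (\<Sum>s\<in>T. \<Sum>t\<in>T - {s}. F j i t s)"
      by (rule sum_offdiag_swap[OF fin])
    also have "\<dots> = (\<Sum>s\<in>T. \<Sum>t\<in>T - {s}. - F i j s t)"
    proof (intro sum.cong refl)
      fix s t assume "s \<in> T" "t \<in> T - {s}"
      then have "T - {t} - {s} = T - {s} - {t}"
        and "(koszul_sign T t * koszul_sign (T - {t}) s :: 'a) =
          - (koszul_sign T s * koszul_sign (T - {s}) t)"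
        using koszul_sign_swap[OF fin, of s t] by auto
      then show "F j i t s = - F i j s t"
        by (simp add: F_def zeta_mult_commute[of p j i e t s])
    qed
    also have "\<dots> = - (\<Sum>s\<in>T. \<Sum>t\<in>T - {s}. F i j s t)"
      by (simp add: sum_negf)
    finally show ?thesis by (simp add: Pair expand)
  qed
qed

lemma Qop_anticommute:
  assumes "fin_supp f"
  shows "Qop p i (Qop p j f) = - Qop p j (Qop p i f)"
  using fs_linear_comp[OF fs_linear_Qop fs_linear_Qop]
    fs_linear_uminus[OF fs_linear_comp[OF fs_linear_Qop fs_linear_Qop]]
  by (rule fs_linear_eqI[OF _ _ assms]) (simp add: Qop_Qmon_anticommute[of p i j])

lemma Qop_Qop_self:
  assumes "fin_supp f" "(2::'a::idom) \<noteq> 0"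
  shows "Qop p j (Qop p j (f :: mon \<Rightarrow> 'a)) = 0"
proof
  fix m
  define X where "X = Qop p j (Qop p j f)"
  have "X m = (- X) m"
    unfolding X_def by (rule fun_cong[OF Qop_anticommute[OF assms(1)]])
  then have "X m + X m = 0"
    by (simp add: eq_neg_iff_add_eq_0)
  then have "2 * X m = 0"
    by (simp only: mult_2)
  then show "X m = 0 m"
    using assms(2) by simp
qed

lemma Qseq_eq_foldr: "Qseq p I = foldr (Qop p) (sorted_list_of_set I)"
  by (simp add: fun_eq_iff Qseq_def)

lemma fs_linear_foldr_Qop: "fs_linear (foldr (Qop p) xs)"
proof (induct xs)
  case Nil
  show ?case using fs_linear_id by (simp add: id_def)
next
  case (Cons x xs)
  show ?case using fs_linear_comp[OF fs_linear_Qop Cons] by (simp add: comp_def)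
qed

lemma fin_supp_foldr: "fin_supp f \<Longrightarrow> fin_supp (foldr (Qop p) xs f)"
  by (rule fs_linear_fin_supp[OF fs_linear_foldr_Qop])

lemma fs_linear_Qseq: "fs_linear (Qseq p I)"
  by (simp add: Qseq_eq_foldr fs_linear_foldr_Qop)

lemma fin_supp_Qseq [simp]: "fin_supp f \<Longrightarrow> fin_supp (Qseq p I f)"
  by (rule fs_linear_fin_supp[OF fs_linear_Qseq])

lemma Qseq_small:
  "Qseq p {} f = f"
  "Qseq p {j} f = Qop p j f"
  "Qseq p {0, 1} f = Qop p 0 (Qop p 1 f)"
  "Qseq p {0, 1, 2} f = Qop p 0 (Qop p 1 (Qop p 2 f))"
  by (simp_all add: Qseq_def)

text \<open>\<open>One_nat_def\<close> is a simp rule, so the simplifier only matches the form with \<open>Suc 0\<close>.\<close>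

lemmas Qseq_small_simps [simp] = Qseq_small[unfolded One_nat_def]

text \<open>The sign comes from anticommuting \<open>Q\<^sub>j\<close> past the smaller indices; a repeated index
  gives \<open>Q\<^sub>j\<^sup>2 = 0\<close>.\<close>

lemma Qop_foldr_Qop:
  assumes "sorted xs" "fin_supp f" "(2::'a::idom) \<noteq> 0"
  shows "Qop p j (foldr (Qop p) xs (f :: mon \<Rightarrow> 'a)) = 0 \<or> j \<notin> set xs \<and>
    (Qop p j (foldr (Qop p) xs f) = foldr (Qop p) (insort j xs) f \<or>
     Qop p j (foldr (Qop p) xs f) = - foldr (Qop p) (insort j xs) f)"
  using assms(1)
proof (induct xs)
  case Nil
  then show ?case by simp
next
  case (Cons x xs)
  define g where "g = foldr (Qop p) xs f"
  have g: "fin_supp g" unfolding g_def by (rule fin_supp_foldr[OF assms(2)])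
  consider "j = x" | "j < x" | "x < j" by linarith
  then show ?case
  proof cases
    case 1
    then show ?thesis using Qop_Qop_self[OF g assms(3)] by (simp add: g_def)
  next
    case 2
    then have "j \<notin> set (x # xs)" using Cons.prems by auto
    then show ?thesis using 2 by simp
  next
      case 3
    let ?h = "foldr (Qop p) (insort j xs) f"
    have key: "Qop p j (foldr (Qop p) (x # xs) f) = - Qop p x (Qop p j g)"
      unfolding g_def using Qop_anticommute[OF fin_supp_foldr[OF assms(2)], of p j x] by simp
    have ins: "foldr (Qop p) (insort j (x # xs)) f = Qop p x ?h"
      using 3 by simp
    have "Qop p j g = 0 \<or> j \<notin> set xs \<and> (Qop p j g = ?h \<or> Qop p j g = - ?h)"
      unfolding g_def by (rule Cons.hyps) (use Cons.prems in simp)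
    then show ?thesis
      using 3 unfolding key ins
      by (auto simp: fs_linear_zero[OF fs_linear_Qop] fs_linear_neg[OF fs_linear_Qop] fin_supp_foldr assms(2))
  qed
qed

lemma Qop_Qseq:
  assumes "finite I" "fin_supp f" "(2::'a::idom) \<noteq> 0"
  shows "Qop p j (Qseq p I (f :: mon \<Rightarrow> 'a)) = 0 \<or> j \<notin> I \<and>
    (Qop p j (Qseq p I f) = Qseq p (insert j I) f \<or> Qop p j (Qseq p I f) = - Qseq p (insert j I) f)"
  using Qop_foldr_Qop[OF sorted_sorted_list_of_set assms(2,3), of p j I] assms(1)
  by (auto simp: Qseq_eq_foldr sorted_list_of_set_insert_remove)

section \<open>Length grading\<close>

definition len_vecs :: "nat \<Rightarrow> (mon \<Rightarrow> 'a::comm_ring_1) set" where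
  "len_vecs k = {f. fin_supp f \<and> (\<forall>m. f m \<noteq> 0 \<longrightarrow> valid_mon m \<and> mlen m = k)}"

lemma len_vecs_fin_supp: "f \<in> len_vecs k \<Longrightarrow> fin_supp f"
  and len_vecs_D: "f \<in> len_vecs k \<Longrightarrow> f m \<noteq> 0 \<Longrightarrow> valid_mon m \<and> mlen m = k"
  and len_vecs_I: "fin_supp f \<Longrightarrow> (\<And>m. f m \<noteq> 0 \<Longrightarrow> valid_mon m \<and> mlen m = k) \<Longrightarrow> f \<in> len_vecs k"
  unfolding len_vecs_def by blast+

lemma len_vecs_by_supp:
  assumes "fin_supp h" "f \<in> len_vecs k" "g \<in> len_vecs k" "\<And>m. h m \<noteq> 0 \<Longrightarrow> f m \<noteq> 0 \<or> g m \<noteq> 0"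
  shows "h \<in> len_vecs k"
proof (rule len_vecs_I[OF assms(1)])
  fix m assume "h m \<noteq> 0"
  then show "valid_mon m \<and> mlen m = k"
    using assms(4)[of m] len_vecs_D[OF assms(2), of m] len_vecs_D[OF assms(3), of m] by blast
qed

lemma len_vecs_zero [simp]: "0 \<in> len_vecs k"
  by (rule len_vecs_I) auto

lemma len_vecs_add: "f \<in> len_vecs k \<Longrightarrow> g \<in> len_vecs k \<Longrightarrow> f + g \<in> len_vecs k"
  and len_vecs_diff: "f \<in> len_vecs k \<Longrightarrow> g \<in> len_vecs k \<Longrightarrow> f - g \<in> len_vecs k"
  by (rule len_vecs_by_supp[of _ f k g]; auto simp: len_vecs_fin_supp)+

lemma len_vecs_neg: "f \<in> len_vecs k \<Longrightarrow> - f \<in> len_vecs k"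
  by (rule len_vecs_by_supp[of _ f k f]) (auto simp: len_vecs_fin_supp)

lemma len_vecs_smul: "f \<in> len_vecs k \<Longrightarrow> smul c f \<in> len_vecs k"
  by (rule len_vecs_by_supp[of _ f k f]) (auto simp: len_vecs_fin_supp smul_apply)

lemma len_vecs_sum: "(\<And>i. i \<in> A \<Longrightarrow> F i \<in> len_vecs k) \<Longrightarrow> (\<Sum>i\<in>A. F i) \<in> len_vecs k"
  by (induct A rule: infinite_finite_induct) (auto intro: len_vecs_add)

lemma len_vecs_basis_vec: "valid_mon m \<Longrightarrow> basis_vec m \<in> len_vecs (mlen m)"
  by (rule len_vecs_I[OF fin_supp_basis_vec]) (simp add: basis_vec_def split: if_splits)

lemma supp_Qmon:
  "supp (Qmon p j (e, T) :: mon \<Rightarrow> 'a::comm_ring_1) \<subseteq> (\<lambda>t. (zeta_mult p j e t, T - {t})) ` T"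
proof -
  have "supp (Qmon p j (e, T) :: mon \<Rightarrow> 'a) \<subseteq>
      (\<Union>t\<in>T. supp (basis_vec (zeta_mult p j e t, T - {t}) :: mon \<Rightarrow> 'a))"
    unfolding Qmon_eq by (rule order.trans[OF supp_sum]) (use supp_smul in blast)
  then show ?thesis by (auto simp: supp_basis_vec)
qed

lemma valid_mon_zeta_mult:
  assumes "valid_mon (e, T)" "t \<in> T" "j \<le> 2"
  shows "valid_mon (zeta_mult p j e t, T - {t})"
    and "mlen (zeta_mult p j e t, T - {t}) = mlen (e, T) - 1"
proof -
  have "3 \<le> t" and fin: "finite {n. e n \<noteq> 0}" and "e 0 = 0"
    using assms by (auto simp: valid_mon_def)
  have "{n. zeta_mult p j e t n \<noteq> 0} \<subseteq> insert (t - j) {n. e n \<noteq> 0}"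
    by (auto simp: zeta_mult_def)
  then have "finite {n. zeta_mult p j e t n \<noteq> 0}"
    by (rule finite_subset) (use fin in simp)
  then show "valid_mon (zeta_mult p j e t, T - {t})"
    using assms \<open>3 \<le> t\<close> \<open>e 0 = 0\<close> by (auto simp: valid_mon_def zeta_mult_def)
  show "mlen (zeta_mult p j e t, T - {t}) = mlen (e, T) - 1"
    using assms by (simp add: valid_mon_def mlen_def)
qed

lemma Qop_len_vecs:
  assumes "f \<in> len_vecs k" "j \<le> 2"
  shows "Qop p j f \<in> len_vecs (k - 1)"
proof (rule len_vecs_I)
  show "fin_supp (Qop p j f)" using assms(1) by (simp add: len_vecs_fin_supp)
  fix m' assume "Qop p j f m' \<noteq> 0"
  then obtain m where m: "m \<in> supp f" "m' \<in> supp (Qmon p j m :: mon \<Rightarrow> 'a)"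
    using supp_lin_ext[of "Qmon p j" f] by (auto simp: supp_def Qop_eq_lin_ext)
  obtain e T where eT: "m = (e, T)" by fastforce
  have "valid_mon (e, T)" "mlen (e, T) = k"
    using len_vecs_D[OF assms(1)] m(1) eT by (auto simp: supp_def)
  moreover obtain t where "t \<in> T" "m' = (zeta_mult p j e t, T - {t})"
    using m(2) eT supp_Qmon by blast
  ultimately show "valid_mon m' \<and> mlen m' = k - 1"
    using valid_mon_zeta_mult[OF _ _ assms(2)] by auto
qed

lemma foldr_Qop_len_vecs:
  "f \<in> len_vecs k \<Longrightarrow> \<forall>j\<in>set xs. j \<le> 2 \<Longrightarrow> foldr (Qop p) xs f \<in> len_vecs (k - length xs)"
proof (induct xs)
  case (Cons x xs)
  then have "Qop p x (foldr (Qop p) xs f) \<in> len_vecs (k - length xs - 1)"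
    by (intro Qop_len_vecs) auto
  then show ?case by simp
qed simp

lemma Qseq_len_vecs:
  assumes "f \<in> len_vecs k" "I \<subseteq> {0, 1, 2}"
  shows "Qseq p I f \<in> len_vecs (k - card I)"
proof -
  have "finite I" "\<forall>j\<in>I. j \<le> 2"
    using assms(2) finite_subset by auto
  then show ?thesis
    using foldr_Qop_len_vecs[OF assms(1), of "sorted_list_of_set I" p] by (simp add: Qseq_eq_foldr)
qed

definition len_proj :: "nat \<Rightarrow> (mon \<Rightarrow> 'a::comm_ring_1) \<Rightarrow> (mon \<Rightarrow> 'a)" where
  "len_proj k f = (\<lambda>m. if mlen m = k then f m else 0)"

lemma fs_linear_len_proj: "fs_linear (len_proj k)"
  unfolding fs_linear_def
proof (intro conjI allI impI)
  fix x :: "mon \<Rightarrow> 'a" assume "fin_supp x"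
  then show "fin_supp (len_proj k x)"
    by (rule fin_supp_mono) (auto simp: supp_def len_proj_def)
qed (simp add: fun_eq_iff len_proj_def smul_apply)

lemma len_proj_len_vecs: "g \<in> len_vecs l \<Longrightarrow> len_proj k g = (if k = l then g else 0)"
  by (auto simp: fun_eq_iff len_proj_def dest: len_vecs_D)

section \<open>A contracting homotopy for \<open>Q\<^sub>j\<close>\<close>

text \<open>\<open>H\<^sub>j\<close> looks for the least \<open>n \<ge> 3\<close> such that \<open>\<tau>\<^sub>n\<close> or \<open>\<zeta>\<^bsub>n-j\<^esub>\<^bsup>p^j\<^esup>\<close> divides
  the monomial; it is zero if \<open>\<tau>\<^sub>n\<close> divides and otherwise trades \<open>\<zeta>\<^bsub>n-j\<^esub>\<^bsup>p^j\<^esup>\<close> for \<open>\<tau>\<^sub>n\<close>.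
  Since \<open>j \<le> 2\<close>, distinct \<open>n \<ge> 3\<close> give distinct \<open>n - j \<ge> 1\<close>, which makes
  \<open>H\<^sub>j Q\<^sub>j + Q\<^sub>j H\<^sub>j\<close> the identity on monomials containing some \<open>\<tau>\<close>.\<close>

definition homotopy_index :: "nat \<Rightarrow> nat \<Rightarrow> (nat \<Rightarrow> nat) \<Rightarrow> nat set \<Rightarrow> nat \<Rightarrow> bool" where
  "homotopy_index p j e T n \<longleftrightarrow> 3 \<le> n \<and> (n \<in> T \<or> p ^ j \<le> e (n - j))"

definition Hmon :: "nat \<Rightarrow> nat \<Rightarrow> mon \<Rightarrow> (mon \<Rightarrow> 'a::comm_ring_1)" where
  "Hmon p j m = (let e = fst m; T = snd m; n = (LEAST n. homotopy_index p j e T n) in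
     if (\<exists>n. homotopy_index p j e T n) \<and> n \<notin> T
     then basis_vec (e(n - j := e (n - j) - p ^ j), insert n T) else 0)"

definition Hop :: "nat \<Rightarrow> nat \<Rightarrow> (mon \<Rightarrow> 'a::comm_ring_1) \<Rightarrow> (mon \<Rightarrow> 'a)" where
  "Hop p j = lin_ext (Hmon p j)"

lemma fin_supp_Hmon [simp]: "fin_supp (Hmon p j m)"
  by (simp add: Hmon_def Let_def)

lemma fs_linear_Hop: "fs_linear (Hop p j)"
  unfolding Hop_def by (rule fs_linear_lin_ext) simp

lemma Hop_basis_vec [simp]: "Hop p j (basis_vec m) = Hmon p j m"
  by (simp add: Hop_def)

lemma Hmon_eq:
  assumes "homotopy_index p j e T n" "\<And>k. k < n \<Longrightarrow> \<not> homotopy_index p j e T k"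
  shows "Hmon p j (e, T) =
    (if n \<in> T then 0 else basis_vec (e(n - j := e (n - j) - p ^ j), insert n T))"
proof -
  have "(LEAST n. homotopy_index p j e T n) = n"
    by (rule Least_equality[of "homotopy_index p j e T", OF assms(1)]) (use assms(2) not_less in blast)
  then show ?thesis using assms(1) by (auto simp: Hmon_def Let_def)
qed

lemma Hmon_cases:
  "Hmon p j (e, T) = 0 \<or> (\<exists>n. homotopy_index p j e T n \<and> n \<notin> T \<and>
     Hmon p j (e, T) = basis_vec (e(n - j := e (n - j) - p ^ j), insert n T))"
  unfolding Hmon_def Let_def fst_conv snd_conv by (metis LeastI_ex)

lemma Hop_Qmon:
  "Hop p j (Qmon p j (e, T)) =
    (\<Sum>t\<in>T. smul (koszul_sign T t) (Hmon p j (zeta_mult p j e t, T - {t})) :: mon \<Rightarrow> 'a::comm_ring_1)"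
  by (simp add: Qmon_eq fs_linear_sum[OF fs_linear_Hop] fs_linear_smul[OF fs_linear_Hop])

context
  fixes p j :: nat and e :: "nat \<Rightarrow> nat" and T :: "nat set" and n :: nat
  assumes fin: "finite T" and T3: "\<And>t. t \<in> T \<Longrightarrow> 3 \<le> t" and j2: "j \<le> 2"
    and index: "homotopy_index p j e T n"
    and least: "\<And>k. k < n \<Longrightarrow> \<not> homotopy_index p j e T k"
begin

lemma index_ge_3: "3 \<le> n"
  using index by (simp add: homotopy_index_def)

lemma index_le: "t \<in> T \<Longrightarrow> n \<le> t"
  using least[of t] T3[of t] by (force simp: homotopy_index_def)

lemma index_shift_inj: "3 \<le> a \<Longrightarrow> 3 \<le> b \<Longrightarrow> a - j = b - j \<Longrightarrow> a = b"
  using j2 by arith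

lemma least_after_zeta_mult:
  assumes "k < n" "n \<le> t"
  shows "\<not> homotopy_index p j (zeta_mult p j e t) (T - {t}) k"
proof
  assume a: "homotopy_index p j (zeta_mult p j e t) (T - {t}) k"
  then have "3 \<le> k" by (simp add: homotopy_index_def)
  then have "zeta_mult p j e t (k - j) = e (k - j)"
    using index_shift_inj[of k t] assms index_ge_3 by (auto simp: zeta_mult_def)
  then show False
    using a least[OF assms(1)] by (auto simp: homotopy_index_def)
qed


lemma koszul_sign_least: "koszul_sign (insert n T) n = 1"
proof -
  have "{s \<in> insert n T. s < n} = {}" using index_le by force
  then show ?thesis unfolding koszul_sign_def by (simp only: card.empty power_0)
qed

lemma homotopy_mon_index_in:
  assumes "n \<in> T"
  shows "Hop p j (Qmon p j (e, T)) + Qop p j (Hmon p j (e, T)) = (basis_vec (e, T) :: mon \<Rightarrow> 'a::comm_ring_1)"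
proof -
  have H0: "Hmon p j (e, T) = (0 :: mon \<Rightarrow> 'a)"
    using Hmon_eq[OF index least] assms by simp
  have a: "homotopy_index p j (zeta_mult p j e n) (T - {n}) n"
    using index_ge_3 by (simp add: homotopy_index_def zeta_mult_def)
  have "Hmon p j (zeta_mult p j e n, T - {n}) = (basis_vec
      ((zeta_mult p j e n)(n - j := zeta_mult p j e n (n - j) - p ^ j), insert n (T - {n})) :: mon \<Rightarrow> 'a)"
    using Hmon_eq[OF a least_after_zeta_mult[OF _ order.refl]] by simp
  also have "(zeta_mult p j e n)(n - j := zeta_mult p j e n (n - j) - p ^ j) = e"
    by (auto simp: zeta_mult_def fun_eq_iff)
  also have "insert n (T - {n}) = T" using assms by auto
  finally have Hn: "Hmon p j (zeta_mult p j e n, T - {n}) = (basis_vec (e, T) :: mon \<Rightarrow> 'a)" .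
  have Ht: "Hmon p j (zeta_mult p j e t, T - {t}) = (0 :: mon \<Rightarrow> 'a)" if "t \<in> T - {n}" for t
  proof -
    have "n \<in> T - {t}" using that assms by auto
    then have a: "homotopy_index p j (zeta_mult p j e t) (T - {t}) n"
      using index_ge_3 by (simp add: homotopy_index_def)
    show ?thesis
      using Hmon_eq[OF a least_after_zeta_mult[OF _ index_le]] that \<open>n \<in> T - {t}\<close> by simp
  qed
  have "Hop p j (Qmon p j (e, T)) = smul (koszul_sign T n) (Hmon p j (zeta_mult p j e n, T - {n}))
      + (\<Sum>t\<in>T - {n}. smul (koszul_sign T t) (Hmon p j (zeta_mult p j e t, T - {t})) :: mon \<Rightarrow> 'a)"
    unfolding Hop_Qmon by (rule sum.remove[OF fin assms])
  also have "\<dots> = basis_vec (e, T)"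
    using Ht koszul_sign_least[where 'a = 'a] by (simp add: Hn insert_absorb[OF assms])
  finally show ?thesis by (simp add: H0 fs_linear_zero[OF fs_linear_Qop])
qed

lemma homotopy_mon_index_notin:
  assumes "n \<notin> T"
  shows "Hop p j (Qmon p j (e, T)) + Qop p j (Hmon p j (e, T)) = (basis_vec (e, T) :: mon \<Rightarrow> 'a::comm_ring_1)"
proof -
  have pe: "p ^ j \<le> e (n - j)" using index assms by (simp add: homotopy_index_def)
  define e0 where "e0 = e(n - j := e (n - j) - p ^ j)"
  have H0: "Hmon p j (e, T) = (basis_vec (e0, insert n T) :: mon \<Rightarrow> 'a)"
    using Hmon_eq[OF index least] assms by (simp add: e0_def)
  have z0: "zeta_mult p j e0 n = e" using pe by (auto simp: zeta_mult_def e0_def fun_eq_iff)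
  have sign: "(koszul_sign (insert n T) t :: 'a) = - koszul_sign T t" if "t \<in> T" for t
  proof -
    have "n < t" using index_le[OF that] assms that by (cases "n = t") auto
    then have "{s \<in> insert n T. s < t} = insert n {s \<in> T. s < t}" by auto
    then show ?thesis using assms fin by (simp add: koszul_sign_def)
  qed
  have Ht: "Hmon p j (zeta_mult p j e t, T - {t}) =
      (basis_vec (zeta_mult p j e0 t, insert n T - {t}) :: mon \<Rightarrow> 'a)" if "t \<in> T" for t
  proof -
    have "n - j \<noteq> t - j" using index_shift_inj[of n t] index_ge_3 T3[OF that] assms that by auto
    then have a: "homotopy_index p j (zeta_mult p j e t) (T - {t}) n"
      using index_ge_3 pe by (simp add: homotopy_index_def zeta_mult_def)
    have "Hmon p j (zeta_mult p j e t, T - {t}) = (basis_vec ((zeta_mult p j e t)(n - j :=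
        zeta_mult p j e t (n - j) - p ^ j), insert n (T - {t})) :: mon \<Rightarrow> 'a)"
      using Hmon_eq[OF a least_after_zeta_mult[OF _ index_le[OF that]]] assms by simp
    also have "(zeta_mult p j e t)(n - j := zeta_mult p j e t (n - j) - p ^ j) = zeta_mult p j e0 t"
      using \<open>n - j \<noteq> t - j\<close> by (auto simp: zeta_mult_def e0_def fun_eq_iff)
    also have "insert n (T - {t}) = insert n T - {t}" using assms that by auto
    finally show ?thesis .
  qed
  have "(Qop p j (Hmon p j (e, T)) :: mon \<Rightarrow> 'a) =
      smul (koszul_sign (insert n T) n) (basis_vec (zeta_mult p j e0 n, T))
      + (\<Sum>t\<in>T. smul (koszul_sign (insert n T) t) (basis_vec (zeta_mult p j e0 t, insert n T - {t})))"
    using assms by (simp add: H0 Qmon_eq fin)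
  also have "\<dots> = basis_vec (e, T) - Hop p j (Qmon p j (e, T))"
    by (simp add: koszul_sign_least z0 Hop_Qmon sign Ht sum_negf)
  finally show ?thesis by simp
qed

end

lemma homotopy_mon:
  assumes "finite T" "T \<noteq> {}" "\<And>t. t \<in> T \<Longrightarrow> 3 \<le> t" "j \<le> 2"
  shows "Hop p j (Qmon p j (e, T)) + Qop p j (Hmon p j (e, T)) = (basis_vec (e, T) :: mon \<Rightarrow> 'a::comm_ring_1)"
proof -
  define n where "n = (LEAST n. homotopy_index p j e T n)"
  have "\<exists>n. homotopy_index p j e T n"
    using assms(2,3) by (auto simp: homotopy_index_def)
  then have index: "homotopy_index p j e T n"
    unfolding n_def by (rule LeastI_ex)
  have least: "\<not> homotopy_index p j e T k" if "k < n" for k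
    using that unfolding n_def by (rule not_less_Least)
  show ?thesis
    using homotopy_mon_index_in[OF assms(1,3,4) index least]
      homotopy_mon_index_notin[OF assms(1,3,4) index least] by blast
qed

lemma Hop_Qop_homotopy:
  assumes "f \<in> len_vecs k" "1 \<le> k" "j \<le> 2"
  shows "Hop p j (Qop p j f) + Qop p j (Hop p j f) = f"
  using fs_linear_plus[OF fs_linear_comp[OF fs_linear_Hop fs_linear_Qop] fs_linear_comp[OF fs_linear_Qop fs_linear_Hop]]
    fs_linear_id len_vecs_fin_supp[OF assms(1)]
proof (rule fs_linear_eqI)
  fix m assume "m \<in> supp f"
  then have v: "valid_mon m" "mlen m = k" using len_vecs_D[OF assms(1)] by (auto simp: supp_def)
  obtain e T where eT: "m = (e, T)" by fastforce
  have "finite T" "T \<noteq> {}" "\<And>t. t \<in> T \<Longrightarrow> 3 \<le> t"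
    using v assms(2) eT by (auto simp: valid_mon_def mlen_def)
  then show "Hop p j (Qop p j (basis_vec m)) + Qop p j (Hop p j (basis_vec m)) = basis_vec m"
    unfolding eT Qop_basis_vec Hop_basis_vec by (rule homotopy_mon[OF _ _ _ assms(3)])
qed

lemma Qop_exact:
  assumes "f \<in> len_vecs k" "1 \<le> k" "j \<le> 2" "Qop p j f = 0"
  shows "f = Qop p j (Hop p j f)"
  using Hop_Qop_homotopy[OF assms(1-3), of p] assms(4) by (simp add: fs_linear_zero[OF fs_linear_Hop])

lemma Hop_len_vecs:
  assumes "f \<in> len_vecs k" "j \<le> 2"
  shows "Hop p j f \<in> len_vecs (k + 1)"
proof (rule len_vecs_I)
  show "fin_supp (Hop p j f)" using fs_linear_fin_supp[OF fs_linear_Hop len_vecs_fin_supp[OF assms(1)]] .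
  fix m' assume "Hop p j f m' \<noteq> 0"
  then obtain m where m: "m \<in> supp f" "m' \<in> supp (Hmon p j m :: mon \<Rightarrow> 'a)"
    using supp_lin_ext[of "Hmon p j" f] by (auto simp: supp_def Hop_def)
  obtain e T where eT: "m = (e, T)" by fastforce
  have v: "valid_mon (e, T)" "mlen (e, T) = k"
    using len_vecs_D[OF assms(1)] m(1) eT by (auto simp: supp_def)
  have "Hmon p j (e, T) \<noteq> (0 :: mon \<Rightarrow> 'a)" using m(2) eT by (auto simp: supp_def)
  with Hmon_cases[of p j e T] obtain n where n: "homotopy_index p j e T n" "n \<notin> T"
      "Hmon p j (e, T) = (basis_vec (e(n - j := e (n - j) - p ^ j), insert n T) :: mon \<Rightarrow> 'a)"
    by blast
  have m': "m' = (e(n - j := e (n - j) - p ^ j), insert n T)"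
    using m(2) eT n(3) by (simp add: supp_basis_vec)
  have fin: "finite {n. e n \<noteq> 0}" "finite T" and "e 0 = 0" "T \<subseteq> {3..}"
    using v(1) by (auto simp: valid_mon_def)
  have "{x. (e(n - j := e (n - j) - p ^ j)) x \<noteq> 0} \<subseteq> insert (n - j) {n. e n \<noteq> 0}" by auto
  then have "finite {x. (e(n - j := e (n - j) - p ^ j)) x \<noteq> 0}"
    by (rule finite_subset) (use fin in simp)
  moreover have "3 \<le> n" using n(1) by (simp add: homotopy_index_def)
  ultimately show "valid_mon m' \<and> mlen m' = k + 1"
    using v(2) n(2) assms(2) fin \<open>e 0 = 0\<close> \<open>T \<subseteq> {3..}\<close>
    by (simp add: m' valid_mon_def mlen_def)
qed

section \<open>Internal degree\<close>

definition zeta_deg :: "nat \<Rightarrow> (nat \<Rightarrow> nat) \<Rightarrow> nat" where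
  "zeta_deg p e = (\<Sum>n\<in>{n. e n \<noteq> 0}. e n * (2 * (p ^ n - 1)))"

lemma mdeg_eq: "mdeg p (e, T) = zeta_deg p e + (\<Sum>n\<in>T. 2 * p ^ n - 1)"
  by (simp add: mdeg_def zeta_deg_def)

lemma zeta_deg_upd:
  assumes "finite {n. e n \<noteq> 0}"
  shows "zeta_deg p (e(k := e k + c)) = zeta_deg p e + c * (2 * (p ^ k - 1))"
proof -
  define w where "w n = 2 * (p ^ n - 1)" for n
  define A where "A = insert k {n. e n \<noteq> 0}"
  have A: "finite A" using assms by (simp add: A_def)
  have "zeta_deg p (e(k := e k + c)) = (\<Sum>n\<in>A. (e(k := e k + c)) n * w n)"
    unfolding zeta_deg_def w_def by (rule sum.mono_neutral_left[OF A]) (auto simp: A_def)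
  also have "\<dots> = (\<Sum>n\<in>A. e n * w n + (if n = k then c * w k else 0))"
    by (rule sum.cong) (auto simp: algebra_simps)
  also have "\<dots> = (\<Sum>n\<in>A. e n * w n) + (\<Sum>n\<in>A. if n = k then c * w k else 0)"
    by (rule sum.distrib)
  also have "(\<Sum>n\<in>A. e n * w n) = zeta_deg p e"
    unfolding zeta_deg_def w_def by (rule sum.mono_neutral_right[OF A]) (auto simp: A_def)
  also have "(\<Sum>n\<in>A. if n = k then c * w k else 0) = c * w k"
    using A by (simp add: A_def)
  finally show ?thesis by (simp only: w_def)
qed

lemma tau_degree_split:
  assumes "1 \<le> (p::nat)" "1 \<le> t"
  shows "p * (2 * (p ^ (t - 1) - 1)) + (2 * p - 1) = 2 * p ^ t - 1"
proof -
  obtain t' where t: "t = Suc t'" using assms(2) by (cases t) auto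
  obtain p' where p: "p = Suc p'" using assms(1) by (cases p) auto
  obtain r where r: "p ^ t' = Suc r" using assms(1) by (cases "p ^ t'") auto
  have "p ^ t = p * Suc r" using r t by simp
  then show ?thesis using r t p by (simp add: algebra_simps)
qed

lemma mdeg_zeta_mult_Q1:
  assumes "valid_mon (e, T)" "t \<in> T" "1 \<le> p"
  shows "mdeg p (zeta_mult p 1 e t, T - {t}) + (2 * p - 1) = mdeg p (e, T)"
proof -
  have fin: "finite {n. e n \<noteq> 0}" "finite T" and "3 \<le> t"
    using assms by (auto simp: valid_mon_def)
  have "zeta_deg p (zeta_mult p 1 e t) = zeta_deg p e + p * (2 * (p ^ (t - 1) - 1))"
    unfolding zeta_mult_def using zeta_deg_upd[OF fin(1), of p "t - 1" "p ^ 1"] by simp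
  moreover have "(\<Sum>n\<in>T. 2 * p ^ n - 1) = (2 * p ^ t - 1) + (\<Sum>n\<in>T - {t}. 2 * p ^ n - 1)"
    by (rule sum.remove[OF fin(2) assms(2)])
  ultimately show ?thesis
    using tau_degree_split[OF assms(3), of t] \<open>3 \<le> t\<close> by (simp add: mdeg_eq)
qed

lemma mdeg_Hmon_0:
  assumes "valid_mon (e, T)" "1 \<le> p" "(Hmon p 0 (e, T) :: mon \<Rightarrow> 'a::comm_ring_1) m' \<noteq> 0"
  shows "mdeg p m' = mdeg p (e, T) + 1"
proof -
  have fin: "finite {n. e n \<noteq> 0}" "finite T" using assms(1) by (auto simp: valid_mon_def)
  have "Hmon p 0 (e, T) \<noteq> (0 :: mon \<Rightarrow> 'a)" using assms(3) by auto
  with Hmon_cases[of p 0 e T] obtain n where n: "homotopy_index p 0 e T n" "n \<notin> T"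
      "Hmon p 0 (e, T) = (basis_vec (e(n - 0 := e (n - 0) - p ^ 0), insert n T) :: mon \<Rightarrow> 'a)"
    by blast
  have m': "m' = (e(n := e n - 1), insert n T)"
    using assms(3) n(3) by (simp add: basis_vec_def split: if_splits)
  define e' where "e' = e(n := e n - 1)"
  have "e = e'(n := e' n + 1)"
    using n(1,2) by (auto simp: e'_def fun_eq_iff homotopy_index_def)
  moreover have "finite {x. e' x \<noteq> 0}"
    by (rule finite_subset[OF _ fin(1)]) (auto simp: e'_def)
  ultimately have "zeta_deg p e = zeta_deg p e' + 2 * (p ^ n - 1)"
    using zeta_deg_upd[of e' p n 1] by simp
  moreover have "m' = (e', insert n T)"
    using m' by (simp add: e'_def)
  moreover have "1 \<le> p ^ n" using assms(2) by simp
  ultimately show ?thesis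
    using fin(2) n(2) by (simp add: mdeg_eq)
qed

definition deg_below :: "nat \<Rightarrow> nat \<Rightarrow> (mon \<Rightarrow> 'a::comm_ring_1) \<Rightarrow> bool" where
  "deg_below p N f \<longleftrightarrow> (\<forall>m. f m \<noteq> 0 \<longrightarrow> mdeg p m < N)"

lemma deg_below_exists: "fin_supp f \<Longrightarrow> \<exists>N. deg_below p N f"
  unfolding fin_supp_def deg_below_def supp_def
  by (metis (mono_tags, lifting) finite_imageI finite_nat_set_iff_bounded imageI mem_Collect_eq)

text \<open>\<open>Q\<^sub>1\<close> lowers the degree by \<open>2p - 1\<close> and \<open>H\<^sub>0\<close> raises it by \<open>1\<close>.\<close>

lemma deg_below_Hop_Qop:
  assumes "2 \<le> p" "x \<in> len_vecs k" "deg_below p (Suc N) x"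
  shows "deg_below p N (Hop p 0 (Qop p 1 x))"
  unfolding deg_below_def
proof (intro allI impI)
  fix m'' assume "Hop p 0 (Qop p 1 x) m'' \<noteq> 0"
  then obtain m' where m': "m' \<in> supp (Qop p 1 x)" "m'' \<in> supp (Hmon p 0 m' :: mon \<Rightarrow> 'a)"
    using supp_lin_ext[of "Hmon p 0" "Qop p 1 x"] by (auto simp: supp_def Hop_def)
  then obtain m where m: "m \<in> supp x" "m' \<in> supp (Qmon p 1 m :: mon \<Rightarrow> 'a)"
    using supp_lin_ext[of "Qmon p 1" x] by (auto simp: Qop_eq_lin_ext)
  obtain e T where eT: "m = (e, T)" by fastforce
  have v: "valid_mon (e, T)" "mdeg p (e, T) < Suc N"
    using len_vecs_D[OF assms(2)] assms(3) m(1) eT by (auto simp: supp_def deg_below_def)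
  obtain t where t: "t \<in> T" "m' = (zeta_mult p 1 e t, T - {t})"
    using m(2) eT supp_Qmon by blast
  have v': "valid_mon (zeta_mult p 1 e t, T - {t})"
    using valid_mon_zeta_mult(1)[OF v(1) t(1), where j = 1 and p = p] by simp
  have "mdeg p m'' = mdeg p m' + 1"
    using mdeg_Hmon_0[where 'a = 'a, OF v'] m'(2) t(2) assms(1) by (simp add: supp_def)
  moreover have "mdeg p m' + (2 * p - 1) = mdeg p (e, T)"
    using mdeg_zeta_mult_Q1[OF v(1) t(1)] assms(1) t(2) by simp
  ultimately show "mdeg p m'' < N" using v(2) assms(1) by simp
qed

text \<open>If \<open>Q\<^sub>1 x = Q\<^sub>0 (Q\<^sub>0 a + Q\<^sub>1 b)\<close>, then \<open>x + Q\<^sub>0 b\<close> is a \<open>Q\<^sub>1\<close>-cycle, hence a \<open>Q\<^sub>1\<close>-boundary.\<close>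

lemma len2_decomp_of_Q1_eq:
  assumes "(2::'a::idom) \<noteq> 0" "x \<in> len_vecs 2"
    and "a \<in> len_vecs 3" "b \<in> len_vecs 3" "Qop p 1 x = Qop p 0 (Qop p 0 a + Qop p 1 b)"
  shows "\<exists>a\<in>len_vecs 3. \<exists>b\<in>len_vecs 3. x = Qop p 0 a + Qop p 1 (b :: mon \<Rightarrow> 'a)"
proof -
  have fx: "fin_supp x" and fab: "fin_supp a" "fin_supp b"
    using assms(2-4) by (simp_all add: len_vecs_fin_supp)
  define x' where "x' = x + Qop p 0 b"
  have "Qop p 0 b \<in> len_vecs 2"
    using Qop_len_vecs[OF assms(4), of 0 p] by simp
  then have x': "x' \<in> len_vecs 2"
    unfolding x'_def by (rule len_vecs_add[OF assms(2)])
  have "Qop p 1 x' = Qop p 1 x + Qop p 1 (Qop p 0 b)"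
    unfolding x'_def by (rule fs_linear_add[OF fs_linear_Qop fx]) (simp add: fab)
  also have "Qop p 1 x = Qop p 0 (Qop p 0 a) + Qop p 0 (Qop p 1 b)"
    unfolding assms(5) by (rule fs_linear_add[OF fs_linear_Qop]) (simp_all add: fab)
  also have "Qop p 1 (Qop p 0 b) = - Qop p 0 (Qop p 1 b)"
    by (rule Qop_anticommute[OF fab(2)])
  also have "Qop p 0 (Qop p 0 a) = 0"
    by (rule Qop_Qop_self[OF fab(1) assms(1)])
  finally have "Qop p 1 x' = 0" by (simp only: add_0_left right_minus)
  have "x' = Qop p 1 (Hop p 1 x')"
    by (rule Qop_exact[OF x' _ _ \<open>Qop p 1 x' = 0\<close>]) simp_all
  then have "x = Qop p 0 (- b) + Qop p 1 (Hop p 1 x')"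
    by (simp add: x'_def fs_linear_neg[OF fs_linear_Qop fab(2)] algebra_simps)
  then show ?thesis
    using len_vecs_neg[OF assms(4)] Hop_len_vecs[OF x', of 1 p] by force
qed

text \<open>Induction on the degree: \<open>Q\<^sub>1 x\<close> is a \<open>Q\<^sub>0\<close>-cycle of length 1, hence equals \<open>Q\<^sub>0 y\<close> for
  \<open>y = H\<^sub>0 Q\<^sub>1 x\<close>, which is a \<open>Q\<^sub>0 Q\<^sub>1\<close>-cycle of smaller degree.\<close>

lemma Q0Q1_cycle_len2:
  assumes "2 \<le> p" "(2::'a::idom) \<noteq> 0"
    and "x \<in> len_vecs 2" "Qop p 0 (Qop p 1 x) = (0 :: mon \<Rightarrow> 'a)"
  shows "\<exists>a\<in>len_vecs 3. \<exists>b\<in>len_vecs 3. x = Qop p 0 a + Qop p 1 b"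
proof -
  obtain N where "deg_below p N x"
    using deg_below_exists[OF len_vecs_fin_supp[OF assms(3)]] by blast
  then show ?thesis
    using assms(3,4)
  proof (induct N arbitrary: x)
    case 0
    then have "x = Qop p 0 0 + Qop p 1 0"
      by (auto simp: deg_below_def fun_eq_iff fs_linear_zero[OF fs_linear_Qop])
    then show ?case
      using len_vecs_zero by blast
  next
    case (Suc N)
    have Q1x: "Qop p 1 x \<in> len_vecs 1"
      using Qop_len_vecs[OF Suc.prems(2), of 1 p] by simp
    define y where "y = Hop p 0 (Qop p 1 x)"
    have Q1x_eq: "Qop p 1 x = Qop p 0 y"
      unfolding y_def by (rule Qop_exact[OF Q1x _ _ Suc.prems(3)]) simp_all
    have y: "y \<in> len_vecs 2"
      using Hop_len_vecs[OF Q1x, of 0 p] by (simp add: y_def numeral_2_eq_2)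
    have "Qop p 0 (Qop p 1 y) = - Qop p 1 (Qop p 0 y)"
      by (rule Qop_anticommute[OF len_vecs_fin_supp[OF y]])
    also have "\<dots> = 0"
      using Suc.prems(2) by (simp add: Q1x_eq[symmetric] Qop_Qop_self[OF _ assms(2)] len_vecs_fin_supp)
    finally obtain a b where ab: "a \<in> len_vecs 3" "b \<in> len_vecs 3" "y = Qop p 0 a + Qop p 1 b"
      using Suc.hyps[OF deg_below_Hop_Qop[OF assms(1) Suc.prems(2,1), folded y_def] y] by blast
    show ?case
      by (rule len2_decomp_of_Q1_eq[OF assms(2) Suc.prems(2) ab(1,2) Q1x_eq[unfolded ab(3)]])
  qed
qed

section \<open>The submodule \<open>S\<close>\<close>

definition S_gens :: "nat \<Rightarrow> (mon \<Rightarrow> 'a::comm_ring_1) set" where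
  "S_gens p = {Qseq p I (basis_vec m) | I m. I \<subseteq> {0, 1, 2} \<and> valid_mon m \<and> 3 \<le> mlen m}"

lemma Ssub_eq_span: "Ssub p = module.span smul (S_gens p)"
  by (simp add: Ssub_def S_gens_def)

lemma S_gensE:
  assumes "g \<in> S_gens p"
  obtains I m where "I \<subseteq> {0, 1, 2}" "valid_mon m" "3 \<le> mlen m" "g = Qseq p I (basis_vec m)"
    "g \<in> len_vecs (mlen m - card I)"
  using assms Qseq_len_vecs[OF len_vecs_basis_vec] unfolding S_gens_def by blast

lemma fin_supp_Ssub: "s \<in> Ssub p \<Longrightarrow> fin_supp s"
  unfolding Ssub_eq_span by (rule fin_supp_span) (auto simp: S_gens_def)

lemma Ssub_add: "s \<in> Ssub p \<Longrightarrow> t \<in> Ssub p \<Longrightarrow> s + t \<in> Ssub p"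
  and Ssub_diff: "s \<in> Ssub p \<Longrightarrow> t \<in> Ssub p \<Longrightarrow> s - t \<in> Ssub p"
  and Ssub_neg: "s \<in> Ssub p \<Longrightarrow> - s \<in> Ssub p"
  and Ssub_smul: "s \<in> Ssub p \<Longrightarrow> smul c s \<in> Ssub p"
  and Ssub_zero: "0 \<in> Ssub p"
  unfolding Ssub_eq_span
  by (simp_all add: fun_module.span_add fun_module.span_diff fun_module.span_neg fun_module.span_scale
      fun_module.span_zero)

lemma len_proj_Ssub:
  assumes "s \<in> Ssub p"
  shows "len_proj k s \<in> Ssub p"
  unfolding Ssub_eq_span
proof (rule fs_linear_span[OF fs_linear_len_proj])
  fix g :: "mon \<Rightarrow> 'a" assume g: "g \<in> S_gens p"
  then show "fin_supp g" by (auto simp: S_gens_def)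
  from g obtain l where "g \<in> len_vecs l" by (rule S_gensE)
  then show "len_proj k g \<in> module.span smul (S_gens p)"
    by (simp add: len_proj_len_vecs fun_module.span_base[OF g] fun_module.span_zero)
qed (use assms in \<open>simp add: Ssub_eq_span\<close>)

lemma Qop_Ssub:
  assumes "s \<in> Ssub p" "j \<le> 2" "(2::'a::idom) \<noteq> 0"
  shows "Qop p j (s :: mon \<Rightarrow> 'a) \<in> Ssub p"
  unfolding Ssub_eq_span
proof (rule fs_linear_span[OF fs_linear_Qop])
  fix g :: "mon \<Rightarrow> 'a" assume g: "g \<in> S_gens p"
  then show "fin_supp g" by (auto simp: S_gens_def)
  from g obtain I m where Im: "I \<subseteq> {0, 1, 2}" "valid_mon m" "3 \<le> mlen m"
    "g = Qseq p I (basis_vec m)" by (rule S_gensE)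
  have "insert j I \<subseteq> {0, 1, 2}" using Im(1) assms(2) by auto
  then have "Qseq p (insert j I) (basis_vec m) \<in> S_gens p"
    unfolding S_gens_def using Im(2,3) by blast
  then have gen: "Qseq p (insert j I) (basis_vec m) \<in> module.span smul (S_gens p)"
    by (rule fun_module.span_base)
  have "finite I" using Im(1) finite_subset by blast
  then consider "Qop p j g = 0" | "Qop p j g = Qseq p (insert j I) (basis_vec m)"
    | "Qop p j g = - Qseq p (insert j I) (basis_vec m)"
    using Qop_Qseq[OF _ fin_supp_basis_vec assms(3), of I p j m] Im(4) by blast
  then show "Qop p j g \<in> module.span smul (S_gens p)"
    by cases (simp_all add: gen fun_module.span_zero fun_module.span_neg)
qed (use assms in \<open>simp add: Ssub_eq_span\<close>)

lemma Qseq_Ssub: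
  assumes "s \<in> Ssub p" "I \<subseteq> {0, 1, 2}" "(2::'a::idom) \<noteq> 0"
  shows "Qseq p I (s :: mon \<Rightarrow> 'a) \<in> Ssub p"
proof -
  have "foldr (Qop p) xs s \<in> Ssub p" if "\<forall>j\<in>set xs. j \<le> 2" for xs
    using that by (induct xs) (auto intro: Qop_Ssub[OF _ _ assms(3)] assms(1))
  moreover have "\<forall>j\<in>set (sorted_list_of_set I). j \<le> 2"
    using assms(2) finite_subset[OF assms(2)] by auto
  ultimately show ?thesis
    by (simp add: Qseq_eq_foldr)
qed

lemma Qseq_len_vecs_Ssub:
  assumes "f \<in> len_vecs k" "3 \<le> k" "I \<subseteq> {0, 1, 2}"
  shows "Qseq p I f \<in> Ssub p"
proof -
  have "Qseq p I f = (\<Sum>m\<in>supp f. smul (f m) (Qseq p I (basis_vec m)))"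
    by (rule fs_linear_expansion[OF fs_linear_Qseq len_vecs_fin_supp[OF assms(1)]])
  also have "\<dots> \<in> module.span smul (S_gens p)"
  proof (intro fun_module.span_sum fun_module.span_scale fun_module.span_base)
    fix m assume "m \<in> supp f"
    then have "valid_mon m" "3 \<le> mlen m"
      using len_vecs_D[OF assms(1), of m] assms(2) by (auto simp: supp_def)
    then show "Qseq p I (basis_vec m) \<in> S_gens p"
      unfolding S_gens_def using assms(3) by blast
  qed
  finally show ?thesis by (simp add: Ssub_eq_span)
qed

lemma Ssub_len_split:
  assumes "a \<in> len_vecs k" "fin_supp b" "len_proj k b = 0" "a + b \<in> Ssub p"
  shows "a \<in> Ssub p" "b \<in> Ssub p"
proof -
  have "len_proj k (a + b) = a"
    using assms(1-3) by (simp add: fs_linear_add[OF fs_linear_len_proj] len_vecs_fin_supp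
        len_proj_len_vecs)
  then show a: "a \<in> Ssub p" using len_proj_Ssub[OF assms(4), of k] by simp
  have "b = (a + b) - a" by simp
  then show "b \<in> Ssub p" using Ssub_diff[OF assms(4) a] by simp
qed

lemma card_le_3:
  assumes "I \<subseteq> {0, 1, 2::nat}"
  shows "card I \<le> 3" and "card I = 3 \<Longrightarrow> I = {0, 1, 2}"
proof -
  have "card I \<le> card {0, 1, 2::nat}" by (rule card_mono) (use assms in auto)
  then show "card I \<le> 3" by simp
  show "I = {0, 1, 2}" if "card I = 3"
    using card_subset_eq[OF _ assms] that by simp
qed

lemma subspace_Q012_image:
  "module.subspace smul ((\<lambda>z. Qop p 0 (Qop p 1 (Qop p 2 z))) ` (len_vecs 3 :: (mon \<Rightarrow> 'a::comm_ring_1) set))"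
proof -
  let ?Q = "\<lambda>z. Qop p 0 (Qop p 1 (Qop p 2 z)) :: mon \<Rightarrow> 'a"
  have lin: "fs_linear ?Q" by (rule fs_linear_comp[OF fs_linear_Qop fs_linear_comp[OF fs_linear_Qop fs_linear_Qop]])
  show ?thesis
    unfolding fun_module.subspace_def
  proof (intro conjI ballI allI)
    show "0 \<in> ?Q ` len_vecs 3"
    proof (rule image_eqI)
      show "0 = ?Q 0" by (rule fs_linear_zero[OF lin, symmetric])
    qed (rule len_vecs_zero)
  next
    fix x y assume "x \<in> ?Q ` len_vecs 3" "y \<in> ?Q ` len_vecs 3"
    then obtain z w where zw: "z \<in> len_vecs 3" "w \<in> len_vecs 3" "x = ?Q z" "y = ?Q w" by blast
    show "x + y \<in> ?Q ` len_vecs 3"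
    proof (rule image_eqI)
      show "x + y = ?Q (z + w)"
        using zw fs_linear_add[OF lin len_vecs_fin_supp len_vecs_fin_supp, OF zw(1,2)] by simp
    qed (rule len_vecs_add[OF zw(1,2)])
  next
    fix c x assume "x \<in> ?Q ` len_vecs 3"
    then obtain z where z: "z \<in> len_vecs 3" "x = ?Q z" by blast
    show "smul c x \<in> ?Q ` len_vecs 3"
    proof (rule image_eqI)
      show "smul c x = ?Q (smul c z)"
        using z fs_linear_smul[OF lin len_vecs_fin_supp[OF z(1)], of c] by simp
    qed (rule len_vecs_smul[OF z(1)])
  qed
qed

text \<open>A generator \<open>Q\<^sup>I m\<close> of \<open>S\<close> has length \<open>mlen m - card I \<ge> 3 - 3\<close>, with equality only for
  \<open>Q\<^sub>0 Q\<^sub>1 Q\<^sub>2\<close> applied to a monomial of length 3.\<close>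

lemma len_proj_0_Ssub:
  assumes "s \<in> Ssub p"
  shows "\<exists>z\<in>len_vecs 3. len_proj 0 s = Qop p 0 (Qop p 1 (Qop p 2 (z :: mon \<Rightarrow> 'a::comm_ring_1)))"
proof -
  let ?G = "{Qop p 0 (Qop p 1 (Qop p 2 (basis_vec m))) | m. valid_mon m \<and> mlen m = 3} :: (mon \<Rightarrow> 'a) set"
  have "len_proj 0 s \<in> module.span smul ?G"
  proof (rule fs_linear_span[OF fs_linear_len_proj])
    fix g :: "mon \<Rightarrow> 'a" assume g: "g \<in> S_gens p"
    then show "fin_supp g" by (auto simp: S_gens_def)
    from g obtain I m where Im: "I \<subseteq> {0, 1, 2}" "valid_mon m" "3 \<le> mlen m"
      "g = Qseq p I (basis_vec m)" "g \<in> len_vecs (mlen m - card I)" by (rule S_gensE)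
    show "len_proj 0 g \<in> module.span smul ?G"
    proof (cases "mlen m - card I = 0")
      case True
      then have "card I = 3" "mlen m = 3" using card_le_3(1)[OF Im(1)] Im(3) by auto
      then have "g = Qop p 0 (Qop p 1 (Qop p 2 (basis_vec m)))"
        using card_le_3(2)[OF Im(1)] Im(4) by simp
      then have "g \<in> ?G" using Im(2) \<open>mlen m = 3\<close> by blast
      then show ?thesis using True Im(5) by (simp add: len_proj_len_vecs fun_module.span_base)
    next
      case False
      then show ?thesis using Im(5) by (simp add: len_proj_len_vecs fun_module.span_zero)
    qed
  qed (use assms in \<open>simp add: Ssub_eq_span\<close>)
  also have "module.span smul ?G \<subseteq> (\<lambda>z. Qop p 0 (Qop p 1 (Qop p 2 z))) ` len_vecs 3"
  proof (intro fun_module.span_minimal subspace_Q012_image subsetI)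
    fix g assume "g \<in> ?G"
    then obtain m where m: "valid_mon m" "mlen m = 3" "g = Qop p 0 (Qop p 1 (Qop p 2 (basis_vec m)))"
      by blast
    then have "basis_vec m \<in> len_vecs 3"
      using len_vecs_basis_vec[OF m(1)] by simp
    then show "g \<in> (\<lambda>z. Qop p 0 (Qop p 1 (Qop p 2 z))) ` len_vecs 3"
      using m(3) by blast
  qed
  finally show ?thesis by blast
qed

lemma len2_in_Ssub_of_Q0Q1:
  assumes "2 \<le> p" "(2::'a::idom) \<noteq> 0"
    and "x \<in> len_vecs 2" "Qop p 0 (Qop p 1 x) \<in> Ssub p"
  shows "(x :: mon \<Rightarrow> 'a) \<in> Ssub p"
proof -
  have fx: "fin_supp x" using len_vecs_fin_supp[OF assms(3)] .
  have "Qop p 0 (Qop p 1 x) \<in> len_vecs 0"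
    using Qop_len_vecs[OF Qop_len_vecs[OF assms(3), of 1 p], of 0 p] by simp
  moreover obtain z where z: "z \<in> len_vecs 3"
    "len_proj 0 (Qop p 0 (Qop p 1 x)) = Qop p 0 (Qop p 1 (Qop p 2 z))"
    using len_proj_0_Ssub[OF assms(4)] by blast
  ultimately have Q01x: "Qop p 0 (Qop p 1 x) = Qop p 0 (Qop p 1 (Qop p 2 z))"
    by (simp add: len_proj_len_vecs)
  have Q2z: "Qop p 2 z \<in> len_vecs 2"
    using Qop_len_vecs[OF z(1), of 2 p] by simp
  define w where "w = x - Qop p 2 z"
  have w: "w \<in> len_vecs 2"
    unfolding w_def by (rule len_vecs_diff[OF assms(3) Q2z])
  have "Qop p 0 (Qop p 1 w) = 0"
    using Q01x fs_linear_diff[OF fs_linear_comp[OF fs_linear_Qop fs_linear_Qop] fx len_vecs_fin_supp[OF Q2z]]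
    by (simp add: w_def)
  then obtain a b where ab: "a \<in> len_vecs 3" "b \<in> len_vecs 3" "w = Qop p 0 a + Qop p 1 b"
    using Q0Q1_cycle_len2[OF assms(1,2) w] by blast
  have "x = Qseq p {0} a + Qseq p {1} b + Qseq p {2} z"
    using ab(3) by (simp add: w_def algebra_simps)
  also have "\<dots> \<in> Ssub p"
    using Qseq_len_vecs_Ssub[OF ab(1), where I = "{0}"] Qseq_len_vecs_Ssub[OF ab(2), where I = "{1}"]
      Qseq_len_vecs_Ssub[OF z(1), where I = "{2}"]
    by (intro Ssub_add) simp_all
  finally show ?thesis .
qed

lemma len2_in_Ssub_of_Q0:
  assumes "2 \<le> p" "(2::'a::idom) \<noteq> 0" "x \<in> len_vecs 2" "Qop p 0 x \<in> Ssub p"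
  shows "(x :: mon \<Rightarrow> 'a) \<in> Ssub p"
proof (rule len2_in_Ssub_of_Q0Q1[OF assms(1-3)])
  have "- Qop p 1 (Qop p 0 x) \<in> Ssub p"
    by (intro Ssub_neg Qop_Ssub[OF assms(4) _ assms(2)]) simp
  then show "Qop p 0 (Qop p 1 x) \<in> Ssub p"
    using Qop_anticommute[OF len_vecs_fin_supp[OF assms(3)], of p 0 1] by simp
qed

lemma len2_in_Ssub_of_Q1:
  assumes "2 \<le> p" "(2::'a::idom) \<noteq> 0" "x \<in> len_vecs 2" "Qop p 1 x \<in> Ssub p"
  shows "(x :: mon \<Rightarrow> 'a) \<in> Ssub p"
  by (rule len2_in_Ssub_of_Q0Q1[OF assms(1-3) Qop_Ssub[OF assms(4) _ assms(2)]]) simp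

section \<open>Margolis homology of \<open>S'\<close>\<close>

definition Sprime_gens :: "nat \<Rightarrow> (mon \<Rightarrow> 'a::comm_ring_1) set" where
  "Sprime_gens p = {Qseq p I (basis_vec m) | I m. I \<subseteq> {0, 1} \<and> valid_mon m \<and> mlen m = 2}"

lemma Sprime_pre_eq_span: "Sprime_pre p = module.span smul (Sprime_gens p \<union> Ssub p)"
  by (simp add: Sprime_pre_def Sprime_gens_def)

lemma Sprime_pre_add: "x \<in> Sprime_pre p \<Longrightarrow> y \<in> Sprime_pre p \<Longrightarrow> x + y \<in> Sprime_pre p"
  and Sprime_pre_diff: "x \<in> Sprime_pre p \<Longrightarrow> y \<in> Sprime_pre p \<Longrightarrow> x - y \<in> Sprime_pre p"
  unfolding Sprime_pre_eq_span by (simp_all add: fun_module.span_add fun_module.span_diff)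

lemma Qseq_len2_Sprime_pre:
  assumes "f \<in> len_vecs 2" "I \<subseteq> {0, 1}"
  shows "Qseq p I f \<in> Sprime_pre p"
proof -
  have "Qseq p I f = (\<Sum>m\<in>supp f. smul (f m) (Qseq p I (basis_vec m)))"
    by (rule fs_linear_expansion[OF fs_linear_Qseq len_vecs_fin_supp[OF assms(1)]])
  also have "\<dots> \<in> module.span smul (Sprime_gens p \<union> Ssub p)"
  proof (intro fun_module.span_sum fun_module.span_scale fun_module.span_base UnI1)
    fix m assume "m \<in> supp f"
    then have "valid_mon m" "mlen m = 2"
      using len_vecs_D[OF assms(1), of m] by (auto simp: supp_def)
    then show "Qseq p I (basis_vec m) \<in> Sprime_gens p"
      unfolding Sprime_gens_def using assms(2) by blast
  qed
  finally show ?thesis by (simp add: Sprime_pre_eq_span)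
qed

lemma subset_01_cases: "I \<subseteq> {0, 1 :: nat} \<Longrightarrow> I = {} \<or> I = {0} \<or> I = {1} \<or> I = {0, 1}"
  by auto

definition Sprime_normal_form :: "nat \<Rightarrow> (mon \<Rightarrow> 'a::comm_ring_1) set" where
  "Sprime_normal_form p = {s + a + Qop p 0 b + Qop p 1 c + Qop p 0 (Qop p 1 d) | s a b c d.
     s \<in> Ssub p \<and> a \<in> len_vecs 2 \<and> b \<in> len_vecs 2 \<and> c \<in> len_vecs 2 \<and> d \<in> len_vecs 2}"

lemma Sprime_normal_formI:
  "s \<in> Ssub p \<Longrightarrow> a \<in> len_vecs 2 \<Longrightarrow> b \<in> len_vecs 2 \<Longrightarrow> c \<in> len_vecs 2 \<Longrightarrow> d \<in> len_vecs 2 \<Longrightarrow>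
    s + a + Qop p 0 b + Qop p 1 c + Qop p 0 (Qop p 1 d) \<in> Sprime_normal_form p"
  unfolding Sprime_normal_form_def by blast

lemma Sprime_normal_formE:
  assumes "x \<in> Sprime_normal_form p"
  obtains s a b c d where "s \<in> Ssub p" "a \<in> len_vecs 2" "b \<in> len_vecs 2" "c \<in> len_vecs 2"
    "d \<in> len_vecs 2" "x = s + a + Qop p 0 b + Qop p 1 c + Qop p 0 (Qop p 1 d)"
  using assms unfolding Sprime_normal_form_def by blast

lemma subspace_Sprime_normal_form: "module.subspace smul (Sprime_normal_form p)"
  unfolding fun_module.subspace_def
proof (intro conjI ballI allI)
  show "0 \<in> Sprime_normal_form p"
    using Sprime_normal_formI[OF Ssub_zero len_vecs_zero len_vecs_zero len_vecs_zero len_vecs_zero, of p]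
    by (simp add: fs_linear_zero[OF fs_linear_Qop])
next
  fix x y :: "mon \<Rightarrow> 'a"
  assume "x \<in> Sprime_normal_form p" "y \<in> Sprime_normal_form p"
  then obtain s a b c d s' a' b' c' d' where
    x: "s \<in> Ssub p" "a \<in> len_vecs 2" "b \<in> len_vecs 2" "c \<in> len_vecs 2" "d \<in> len_vecs 2"
      "x = s + a + Qop p 0 b + Qop p 1 c + Qop p 0 (Qop p 1 d)" and
    y: "s' \<in> Ssub p" "a' \<in> len_vecs 2" "b' \<in> len_vecs 2" "c' \<in> len_vecs 2" "d' \<in> len_vecs 2"
      "y = s' + a' + Qop p 0 b' + Qop p 1 c' + Qop p 0 (Qop p 1 d')"
    by (elim Sprime_normal_formE)
  have "x + y = (s + s') + (a + a') + Qop p 0 (b + b') + Qop p 1 (c + c') + Qop p 0 (Qop p 1 (d + d'))"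
    using x y by (simp add: fs_linear_add[OF fs_linear_Qop] len_vecs_fin_supp algebra_simps)
  then show "x + y \<in> Sprime_normal_form p"
    using Sprime_normal_formI[OF Ssub_add[OF x(1) y(1)] len_vecs_add[OF x(2) y(2)]
        len_vecs_add[OF x(3) y(3)] len_vecs_add[OF x(4) y(4)] len_vecs_add[OF x(5) y(5)]]
    by simp
next
  fix k and x :: "mon \<Rightarrow> 'a"
  assume "x \<in> Sprime_normal_form p"
  then obtain s a b c d where
    x: "s \<in> Ssub p" "a \<in> len_vecs 2" "b \<in> len_vecs 2" "c \<in> len_vecs 2" "d \<in> len_vecs 2"
      "x = s + a + Qop p 0 b + Qop p 1 c + Qop p 0 (Qop p 1 d)"
    by (elim Sprime_normal_formE)
  have "smul k x = smul k s + smul k a + Qop p 0 (smul k b) + Qop p 1 (smul k c)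
      + Qop p 0 (Qop p 1 (smul k d))"
    using x by (simp add: fs_linear_smul[OF fs_linear_Qop] len_vecs_fin_supp
        fun_module.scale_right_distrib)
  then show "smul k x \<in> Sprime_normal_form p"
    using Sprime_normal_formI[OF Ssub_smul[OF x(1)] len_vecs_smul[OF x(2)] len_vecs_smul[OF x(3)]
        len_vecs_smul[OF x(4)] len_vecs_smul[OF x(5)]]
    by simp
qed

lemma Sprime_gens_normal_form: "Sprime_gens p \<subseteq> Sprime_normal_form p"
proof
  fix g :: "mon \<Rightarrow> 'a" assume "g \<in> Sprime_gens p"
  then obtain I m where I: "I \<subseteq> {0, 1}" and "valid_mon m" "mlen m = 2"
    and g: "g = Qseq p I (basis_vec m)"
    unfolding Sprime_gens_def by blast
  then have m: "basis_vec m \<in> len_vecs 2" using len_vecs_basis_vec by metis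
  note I0 = Sprime_normal_formI[OF Ssub_zero _ _ _ _, of _ _ _ _ p]
  from subset_01_cases[OF I] show "g \<in> Sprime_normal_form p"
    using I0[OF m len_vecs_zero len_vecs_zero len_vecs_zero]
      I0[OF len_vecs_zero m len_vecs_zero len_vecs_zero]
      I0[OF len_vecs_zero len_vecs_zero m len_vecs_zero]
      I0[OF len_vecs_zero len_vecs_zero len_vecs_zero m]
    by (auto simp: g fs_linear_zero[OF fs_linear_Qop])
qed

lemma Sprime_pre_normal_form:
  assumes "x \<in> Sprime_pre p"
  obtains s a b c d where "s \<in> Ssub p" "a \<in> len_vecs 2" "b \<in> len_vecs 2" "c \<in> len_vecs 2"
    "d \<in> len_vecs 2" "x = s + a + Qop p 0 b + Qop p 1 c + Qop p 0 (Qop p 1 d)"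
proof -
  have "Sprime_gens p \<union> Ssub p \<subseteq> Sprime_normal_form p"
    using Sprime_gens_normal_form Sprime_normal_formI[OF _ len_vecs_zero len_vecs_zero len_vecs_zero
        len_vecs_zero, of _ p] by (auto simp: fs_linear_zero[OF fs_linear_Qop])
  then have "module.span smul (Sprime_gens p \<union> Ssub p) \<subseteq> Sprime_normal_form p"
    by (rule fun_module.span_minimal[OF _ subspace_Sprime_normal_form])
  then have "x \<in> Sprime_normal_form p"
    using assms by (auto simp: Sprime_pre_eq_span)
  then show ?thesis using that by (rule Sprime_normal_formE)
qed

lemma Qop_normal_form_expand:
  assumes "fin_supp s" "fin_supp a" "fin_supp b" "fin_supp c" "fin_supp d"
  shows "Qop p j (s + a + Qop p 0 b + Qop p 1 c + Qop p 0 (Qop p 1 d)) =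
    Qop p j s + Qop p j a + Qop p j (Qop p 0 b) + Qop p j (Qop p 1 c) + Qop p j (Qop p 0 (Qop p 1 d))"
  using assms by (simp only: fs_linear_add[OF fs_linear_Qop] fin_supp_add fin_supp_Qop)

lemma Sprime_pre_margolis_Q0:
  fixes x :: "mon \<Rightarrow> 'a::idom"
  assumes "2 \<le> p" "(2::'a) \<noteq> 0" "x \<in> Sprime_pre p" "Qop p 0 x \<in> Ssub p"
  shows "\<exists>y\<in>Sprime_pre p. x - Qop p 0 y \<in> Ssub p"
proof -
  obtain s a b c d where x: "s \<in> Ssub p" "a \<in> len_vecs 2" "b \<in> len_vecs 2" "c \<in> len_vecs 2"
    "d \<in> len_vecs 2" "x = s + a + Qop p 0 b + Qop p 1 c + Qop p 0 (Qop p 1 d)"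
    using assms(3) by (rule Sprime_pre_normal_form)
  have fin: "fin_supp s" "fin_supp a" "fin_supp b" "fin_supp c" "fin_supp d"
    using x(1-5) by (simp_all add: fin_supp_Ssub len_vecs_fin_supp)
  have "Qop p 0 x = Qop p 0 s + Qop p 0 a + Qop p 0 (Qop p 0 b) + Qop p 0 (Qop p 1 c)
      + Qop p 0 (Qop p 0 (Qop p 1 d))"
    unfolding x(6) by (rule Qop_normal_form_expand[OF fin])
  then have "Qop p 0 a + Qop p 0 (Qop p 1 c) = Qop p 0 x - Qop p 0 s"
    using Qop_Qop_self[OF fin(3) assms(2)] Qop_Qop_self[OF fin_supp_Qop[OF fin(5)] assms(2)] by simp
  also have "\<dots> \<in> Ssub p"
    using assms(4) Qop_Ssub[OF x(1) _ assms(2)] by (simp add: Ssub_diff)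
  finally have S: "Qop p 0 a + Qop p 0 (Qop p 1 c) \<in> Ssub p" .
  have "Qop p 0 a \<in> len_vecs 1" "Qop p 0 (Qop p 1 c) \<in> len_vecs 0"
    using Qop_len_vecs[OF x(2), of 0 p] Qop_len_vecs[OF Qop_len_vecs[OF x(4), of 1 p], of 0 p] by simp_all
  then have "Qop p 0 a \<in> Ssub p" "Qop p 0 (Qop p 1 c) \<in> Ssub p"
    using Ssub_len_split[OF _ _ _ S] fin by (simp_all add: len_proj_len_vecs)
  then have a: "a \<in> Ssub p" and c: "c \<in> Ssub p"
    using len2_in_Ssub_of_Q0[OF assms(1,2) x(2)] len2_in_Ssub_of_Q0Q1[OF assms(1,2) x(4)] by simp_all
  define y where "y = b + Qop p 1 d"
  have "y \<in> Sprime_pre p"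
    unfolding y_def using Qseq_len2_Sprime_pre[OF x(3), of "{}"] Qseq_len2_Sprime_pre[OF x(5), of "{1}"]
    by (intro Sprime_pre_add) simp_all
  moreover have "x - Qop p 0 y = s + a + Qop p 1 c"
    unfolding x(6) y_def using fin by (simp add: fs_linear_add[OF fs_linear_Qop])
  moreover have "s + a + Qop p 1 c \<in> Ssub p"
    using Qop_Ssub[OF c _ assms(2), of 1] by (intro Ssub_add x(1) a) simp
  ultimately show ?thesis by metis
qed

lemma Sprime_pre_margolis_Q1:
  fixes x :: "mon \<Rightarrow> 'a::idom"
  assumes "2 \<le> p" "(2::'a) \<noteq> 0" "x \<in> Sprime_pre p" "Qop p 1 x \<in> Ssub p"
  shows "\<exists>y\<in>Sprime_pre p. x - Qop p 1 y \<in> Ssub p"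
proof -
  obtain s a b c d where x: "s \<in> Ssub p" "a \<in> len_vecs 2" "b \<in> len_vecs 2" "c \<in> len_vecs 2"
    "d \<in> len_vecs 2" "x = s + a + Qop p 0 b + Qop p 1 c + Qop p 0 (Qop p 1 d)"
    using assms(3) by (rule Sprime_pre_normal_form)
  have fin: "fin_supp s" "fin_supp a" "fin_supp b" "fin_supp c" "fin_supp d"
    using x(1-5) by (simp_all add: fin_supp_Ssub len_vecs_fin_supp)
  have "Qop p 1 x = Qop p 1 s + Qop p 1 a + Qop p 1 (Qop p 0 b) + Qop p 1 (Qop p 1 c)
      + Qop p 1 (Qop p 0 (Qop p 1 d))"
    unfolding x(6) by (rule Qop_normal_form_expand[OF fin])
  moreover have "Qop p 1 (Qop p 0 b) = - Qop p 0 (Qop p 1 b)"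
    by (rule Qop_anticommute[OF fin(3)])
  moreover have "Qop p 1 (Qop p 0 (Qop p 1 d)) = - Qop p 0 (Qop p 1 (Qop p 1 d))"
    by (rule Qop_anticommute[OF fin_supp_Qop[OF fin(5)]])
  ultimately have "Qop p 1 a + - Qop p 0 (Qop p 1 b) = Qop p 1 x - Qop p 1 s"
    using Qop_Qop_self[OF fin(4) assms(2)] Qop_Qop_self[OF fin(5) assms(2)]
    by (simp add: fs_linear_zero[OF fs_linear_Qop])
  also have "\<dots> \<in> Ssub p"
    using assms(4) Qop_Ssub[OF x(1) _ assms(2)] by (simp add: Ssub_diff)
  finally have S: "Qop p 1 a + - Qop p 0 (Qop p 1 b) \<in> Ssub p" .
  have "Qop p 1 a \<in> len_vecs 1" "- Qop p 0 (Qop p 1 b) \<in> len_vecs 0"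
    using Qop_len_vecs[OF x(2), of 1 p] len_vecs_neg[OF Qop_len_vecs[OF Qop_len_vecs[OF x(3), of 1 p], of 0 p]]
    by simp_all
  then have "Qop p 1 a \<in> Ssub p" "- Qop p 0 (Qop p 1 b) \<in> Ssub p"
    using Ssub_len_split[OF _ _ _ S] fin by (simp_all add: len_proj_len_vecs)
  then have a: "a \<in> Ssub p" and b: "b \<in> Ssub p"
    using len2_in_Ssub_of_Q1[OF assms(1,2) x(2)] len2_in_Ssub_of_Q0Q1[OF assms(1,2) x(3)]
      Ssub_neg[of "- Qop p 0 (Qop p 1 b)" p] by simp_all
  define y where "y = c - Qop p 0 d"
  have "y \<in> Sprime_pre p"
    unfolding y_def using Qseq_len2_Sprime_pre[OF x(4), of "{}"] Qseq_len2_Sprime_pre[OF x(5), of "{0}"]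
    by (intro Sprime_pre_diff) simp_all
  moreover have "x - Qop p 1 y = s + a + Qop p 0 b"
    unfolding x(6) y_def using fin Qop_anticommute[OF fin(5), of p 1 0]
    by (simp add: fs_linear_diff[OF fs_linear_Qop])
  moreover have "s + a + Qop p 0 b \<in> Ssub p"
    using Qop_Ssub[OF b _ assms(2), of 0] by (intro Ssub_add x(1) a) simp
  ultimately show ?thesis by metis
qed

section \<open>Freeness of \<open>S'\<close>\<close>

context Modules.module
begin

lemma independent_Un_span_Int:
  assumes "independent (A \<union> C)" "A \<inter> C = {}" "u \<in> span A" "u \<in> span C"
  shows "u = 0"
proof -
  obtain t1 r1 where t1: "finite t1" "t1 \<subseteq> A" "u = (\<Sum>v\<in>t1. r1 v *s v)"
    using assms(3) unfolding span_explicit by blast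
  obtain t2 r2 where t2: "finite t2" "t2 \<subseteq> C" "u = (\<Sum>v\<in>t2. r2 v *s v)"
    using assms(4) unfolding span_explicit by blast
  define w where "w v = (if v \<in> t1 then r1 v else - r2 v)" for v
  have disj: "t1 \<inter> t2 = {}" using t1(2) t2(2) assms(2) by blast
  have "(\<Sum>v\<in>t1 \<union> t2. w v *s v) = (\<Sum>v\<in>t1. w v *s v) + (\<Sum>v\<in>t2. w v *s v)"
    by (rule sum.union_disjoint[OF t1(1) t2(1) disj])
  also have "(\<Sum>v\<in>t1. w v *s v) = u"
    by (simp add: t1(3) w_def)
  also have "(\<Sum>v\<in>t2. w v *s v) = (\<Sum>v\<in>t2. - (r2 v *s v))"
    using disj by (intro sum.cong) (auto simp: w_def)
  also have "\<dots> = - u"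
    by (simp add: sum_negf t2(3))
  also have "u + - u = 0"
    by simp
  finally have "(\<Sum>v\<in>t1 \<union> t2. w v *s v) = 0" .
  then have "w v = 0" if "v \<in> t1" for v
    using independentD[OF assms(1)] t1 t2 that by blast
  then show ?thesis by (simp add: t1(3) w_def)
qed

end

context Vector_Spaces.vector_space
begin

lemma obtain_complement_basis:
  obtains BS B where "BS \<subseteq> V" "V \<subseteq> span BS" "B \<subseteq> E" "B \<inter> BS = {}"
    "independent (B \<union> BS)" "E \<subseteq> span (B \<union> BS)"
proof -
  obtain BS where BS: "BS \<subseteq> V" "independent BS" "V \<subseteq> span BS"
    by (rule maximal_independent_subset)
  obtain B' where B': "BS \<subseteq> B'" "B' \<subseteq> BS \<union> E" "independent B'" "BS \<union> E \<subseteq> span B'"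
    by (rule maximal_independent_subset_extend[OF _ BS(2), of "BS \<union> E"]) auto
  have B'_eq: "B' - BS \<union> BS = B'" using B'(1) by blast
  show ?thesis
  proof (rule that[of BS "B' - BS"])
    show "independent (B' - BS \<union> BS)" "E \<subseteq> span (B' - BS \<union> BS)"
      using B'(3,4) unfolding B'_eq by auto
  qed (use BS(1,3) B'(2) in auto)
qed

end

lemma len2_relation_in_Ssub:
  assumes "2 \<le> p" "(2::'a::idom) \<noteq> 0"
    and u: "u0 \<in> len_vecs 2" "u1 \<in> len_vecs 2" "u2 \<in> len_vecs 2" "u3 \<in> len_vecs 2"
    and S: "u0 + Qop p 0 u1 + Qop p 1 u2 + Qop p 0 (Qop p 1 u3) \<in> Ssub p"
  shows "u0 \<in> Ssub p \<and> u1 \<in> Ssub p \<and> u2 \<in> Ssub p \<and> (u3 :: mon \<Rightarrow> 'a) \<in> Ssub p"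
proof -
  have L1: "Qop p 0 u1 + Qop p 1 u2 \<in> len_vecs 1"
    using len_vecs_add[OF Qop_len_vecs[OF u(2), of 0 p] Qop_len_vecs[OF u(3), of 1 p]] by simp
  have L0: "Qop p 0 (Qop p 1 u3) \<in> len_vecs 0"
    using Qop_len_vecs[OF Qop_len_vecs[OF u(4), of 1 p], of 0 p] by simp
  have fin: "fin_supp (Qop p 0 u1 + Qop p 1 u2)" "fin_supp (Qop p 0 (Qop p 1 u3))"
    using L1 L0 by (simp_all add: len_vecs_fin_supp)
  have S0: "u0 + (Qop p 0 u1 + Qop p 1 u2 + Qop p 0 (Qop p 1 u3)) \<in> Ssub p"
    using S by (simp only: add.assoc)
  have "len_proj 2 (Qop p 0 u1 + Qop p 1 u2 + Qop p 0 (Qop p 1 u3)) = 0"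
    unfolding fs_linear_add[OF fs_linear_len_proj fin]
    using len_proj_len_vecs[OF L1, of 2] len_proj_len_vecs[OF L0, of 2] by simp
  then have "u0 \<in> Ssub p" and S1: "Qop p 0 u1 + Qop p 1 u2 + Qop p 0 (Qop p 1 u3) \<in> Ssub p"
    using Ssub_len_split[OF u(1) fin_supp_add[OF fin] _ S0] by simp_all
  have "len_proj 1 (Qop p 0 (Qop p 1 u3)) = 0"
    using len_proj_len_vecs[OF L0, of 1] by simp
  then have S2: "Qop p 0 u1 + Qop p 1 u2 \<in> Ssub p" and "Qop p 0 (Qop p 1 u3) \<in> Ssub p"
    using Ssub_len_split[OF L1 fin(2) _ S1] by simp_all
  have "u3 \<in> Ssub p"
    by (rule len2_in_Ssub_of_Q0Q1[OF assms(1,2) u(4) \<open>Qop p 0 (Qop p 1 u3) \<in> Ssub p\<close>])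
  have "Qop p 0 (Qop p 0 u1 + Qop p 1 u2) = Qop p 0 (Qop p 1 u2)"
    using u(2,3) by (simp add: fs_linear_add[OF fs_linear_Qop] len_vecs_fin_supp Qop_Qop_self[OF _ assms(2)])
  then have "u2 \<in> Ssub p"
    using Qop_Ssub[OF S2 _ assms(2), of 0] len2_in_Ssub_of_Q0Q1[OF assms(1,2) u(3)] by simp
  then have "Qop p 0 u1 \<in> Ssub p"
    using Ssub_diff[OF S2 Qop_Ssub[OF _ _ assms(2)], of u2 1] by simp
  then have "u1 \<in> Ssub p"
    by (rule len2_in_Ssub_of_Q0[OF assms(1,2) u(2)])
  then show ?thesis using \<open>u0 \<in> Ssub p\<close> \<open>u2 \<in> Ssub p\<close> \<open>u3 \<in> Ssub p\<close> by blast
qed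

lemma Sprime_pre_spanned:
  assumes "(2::'a::idom) \<noteq> 0" "B \<subseteq> len_vecs 2" "BS \<subseteq> Ssub p"
    and "len_vecs 2 \<subseteq> module.span smul (B \<union> BS)"
  shows "(Sprime_pre p :: (mon \<Rightarrow> 'a) set) \<subseteq>
    module.span smul ({Qseq p I b | I b. I \<subseteq> {0, 1} \<and> b \<in> B} \<union> Ssub p)"
proof
  let ?QB = "{Qseq p I b | I b. I \<subseteq> {0, 1} \<and> b \<in> B}"
  have Q: "Qseq p I f \<in> module.span smul (?QB \<union> Ssub p)" if "f \<in> len_vecs 2" "I \<subseteq> {0, 1}" for f I
  proof (rule fs_linear_span[OF fs_linear_Qseq])
    fix v assume "v \<in> B \<union> BS"
    then show "fin_supp v" using assms(2,3) len_vecs_fin_supp fin_supp_Ssub by blast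
    show "Qseq p I v \<in> module.span smul (?QB \<union> Ssub p)"
    proof (cases "v \<in> B")
      case True
      then show ?thesis using that(2) by (blast intro: fun_module.span_base)
    next
      case False
      then have "Qseq p I v \<in> Ssub p"
        using \<open>v \<in> B \<union> BS\<close> assms(3) that(2) by (blast intro: Qseq_Ssub[OF _ _ assms(1)])
      then show ?thesis by (blast intro: fun_module.span_base)
    qed
  qed (use that(1) assms(4) in blast)
  fix x :: "mon \<Rightarrow> 'a" assume "x \<in> Sprime_pre p"
  then obtain s a b c d where x: "s \<in> Ssub p" "a \<in> len_vecs 2" "b \<in> len_vecs 2" "c \<in> len_vecs 2"
    "d \<in> len_vecs 2" "x = s + a + Qop p 0 b + Qop p 1 c + Qop p 0 (Qop p 1 d)"
    by (rule Sprime_pre_normal_form)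
  show "x \<in> module.span smul (?QB \<union> Ssub p)"
    unfolding x(6)
    using Q[OF x(2), of "{}"] Q[OF x(3), of "{0}"] Q[OF x(4), of "{1}"] Q[OF x(5), of "{0, 1}"] x(1)
    by (intro fun_module.span_add) (auto intro: fun_module.span_base)
qed

definition slice_comb ::
    "((mon \<Rightarrow> 'a::comm_ring_1) \<times> nat set) set \<Rightarrow> ((mon \<Rightarrow> 'a) \<times> nat set \<Rightarrow> 'a) \<Rightarrow> nat set \<Rightarrow> (mon \<Rightarrow> 'a)"
  where "slice_comb F c J = (\<Sum>y\<in>{y \<in> F. snd y = J}. smul (c y) (fst y))"

lemma sum_Qseq_eq_slice_combs:
  assumes "finite F" "F \<subseteq> B \<times> Pow {0, 1}" "\<And>b. b \<in> B \<Longrightarrow> fin_supp b"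
  shows "(\<Sum>(b, I)\<in>F. smul (c (b, I)) (Qseq p I b)) = slice_comb F c {} + Qop p 0 (slice_comb F c {0})
    + Qop p 1 (slice_comb F c {1}) + Qop p 0 (Qop p 1 (slice_comb F c {0, 1}))"
proof -
  define T where "T = {{}, {0}, {1}, {0, 1 :: nat}}"
  have fin: "fin_supp (fst y)" if "y \<in> F" for y
    using that assms(2,3) by auto
  have slice: "(\<Sum>y | y \<in> F \<and> snd y = J. smul (c y) (Qseq p (snd y) (fst y))) = Qseq p J (slice_comb F c J)"
    for J
  proof -
    have "Qseq p J (slice_comb F c J) = (\<Sum>y | y \<in> F \<and> snd y = J. Qseq p J (smul (c y) (fst y)))"
      unfolding slice_comb_def by (rule fs_linear_sum[OF fs_linear_Qseq]) (simp add: fin)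
    also have "\<dots> = (\<Sum>y | y \<in> F \<and> snd y = J. smul (c y) (Qseq p (snd y) (fst y)))"
      by (rule sum.cong) (auto simp: fs_linear_smul[OF fs_linear_Qseq fin])
    finally show ?thesis by simp
  qed
  have sT: "snd ` F \<subseteq> T"
  proof
    fix J assume "J \<in> snd ` F"
    then have "J \<subseteq> {0, 1}" using assms(2) by auto
    then show "J \<in> T" using subset_01_cases[of J] by (auto simp: T_def)
  qed
  have "(\<Sum>(b, I)\<in>F. smul (c (b, I)) (Qseq p I b)) = (\<Sum>y\<in>F. smul (c y) (Qseq p (snd y) (fst y)))"
    by (simp add: case_prod_beta)
  also have "\<dots> = (\<Sum>J\<in>T. \<Sum>y | y \<in> F \<and> snd y = J. smul (c y) (Qseq p (snd y) (fst y)))"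
    by (rule sum.group[OF assms(1) _ sT, symmetric]) (simp add: T_def)
  also have "\<dots> = (\<Sum>J\<in>T. Qseq p J (slice_comb F c J))"
    by (intro sum.cong refl slice)
  also have "\<dots> = slice_comb F c {} + Qop p 0 (slice_comb F c {0})
      + Qop p 1 (slice_comb F c {1}) + Qop p 0 (Qop p 1 (slice_comb F c {0, 1}))"
    by (simp add: T_def add.assoc)
  finally show ?thesis .
qed

lemma Qseq_family_independent:
  assumes "2 \<le> p" "(2::'a::idom) \<noteq> 0" "B \<subseteq> len_vecs 2"
    and indep: "module.independent smul (B \<union> BS)" and disj: "B \<inter> BS = {}"
    and S2: "{s \<in> Ssub p. s \<in> len_vecs 2} \<subseteq> module.span smul BS"
    and F: "finite F" "F \<subseteq> B \<times> Pow {0, 1}"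
    and rel: "(\<Sum>(b, I)\<in>F. smul (c (b, I)) (Qseq p I b)) \<in> Ssub p" and "x \<in> F"
  shows "c x = (0 :: 'a)"
proof -
  let ?u = "slice_comb F c"
  have fstB: "fst y \<in> B" if "y \<in> F" for y using F(2) that by auto
  have u_len: "?u J \<in> len_vecs 2" for J
    unfolding slice_comb_def using assms(3) fstB by (intro len_vecs_sum len_vecs_smul) auto
  have u_span: "?u J \<in> module.span smul B" for J
    unfolding slice_comb_def using fstB
    by (intro fun_module.span_sum fun_module.span_scale fun_module.span_base) auto
  have "\<And>b. b \<in> B \<Longrightarrow> fin_supp b"
    using assms(3) len_vecs_fin_supp by blast
  then have uS: "?u {} \<in> Ssub p \<and> ?u {0} \<in> Ssub p \<and> ?u {1} \<in> Ssub p \<and> ?u {0, 1} \<in> Ssub p"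
    using rel sum_Qseq_eq_slice_combs[OF F, of c p]
    by (intro len2_relation_in_Ssub[OF assms(1,2) u_len u_len u_len u_len]) simp
  have "x \<in> B \<times> Pow {0, 1}" using F(2) \<open>x \<in> F\<close> by blast
  then have "snd x \<subseteq> {0, 1}" by (simp add: mem_Times_iff)
  from subset_01_cases[OF this] have "?u (snd x) \<in> Ssub p"
    using uS by (elim disjE) simp_all
  then have "?u (snd x) \<in> module.span smul BS"
    using S2 u_len by blast
  then have zero: "?u (snd x) = 0"
    by (rule fun_module.independent_Un_span_Int[OF indep disj u_span])
  have inj: "inj_on fst {y \<in> F. snd y = snd x}"
    by (auto simp: inj_on_def prod_eq_iff)
  have "(\<Sum>b\<in>fst ` {y \<in> F. snd y = snd x}. smul (c (b, snd x)) b) = ?u (snd x)"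
    by (simp add: slice_comb_def sum.reindex[OF inj]) (auto intro!: sum.cong)
  then have sum0: "(\<Sum>b\<in>fst ` {y \<in> F. snd y = snd x}. smul (c (b, snd x)) b) = 0"
    using zero by simp
  have indepB: "module.independent smul B"
    by (rule fun_module.independent_mono[OF indep]) blast
  have "c (fst x, snd x) = 0"
  proof (rule fun_module.independentD[OF indepB _ _ sum0])
    show "finite (fst ` {y \<in> F. snd y = snd x})" using F(1) by simp
    show "fst ` {y \<in> F. snd y = snd x} \<subseteq> B" using fstB by auto
    show "fst x \<in> fst ` {y \<in> F. snd y = snd x}" using \<open>x \<in> F\<close> by auto
  qed
  then show ?thesis by simp
qed

lemma len_vecs_subset_span:
  assumes "\<And>m. valid_mon m \<Longrightarrow> mlen m = k \<Longrightarrow> basis_vec m \<in> module.span smul X"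
  shows "len_vecs k \<subseteq> module.span smul X"
proof
  fix f :: "mon \<Rightarrow> 'a" assume f: "f \<in> len_vecs k"
  have "f = (\<Sum>m\<in>supp f. smul (f m) (basis_vec m))"
    by (rule fin_supp_expansion[OF len_vecs_fin_supp[OF f]])
  also have "\<dots> \<in> module.span smul X"
    using len_vecs_D[OF f] assms
    by (intro fun_module.span_sum fun_module.span_scale) (simp add: supp_def)
  finally show "f \<in> module.span smul X" .
qed

lemma homogeneous_basis_vec: "homogeneous p (basis_vec m :: mon \<Rightarrow> 'a::comm_ring_1)"
  unfolding homogeneous_def by (rule exI[of _ "mdeg p m"]) (simp add: basis_vec_def)

lemma Sprime_pre_E1_free:
  assumes "2 \<le> p" "(2::'a::field) \<noteq> 0"
  shows "E1_free p (Sprime_pre p :: (mon \<Rightarrow> 'a) set) (Ssub p)"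
proof -
  let ?E = "{basis_vec m | m. valid_mon m \<and> mlen m = 2} :: (mon \<Rightarrow> 'a) set"
  obtain BS B where
    BS: "BS \<subseteq> {s \<in> Ssub p. s \<in> len_vecs 2}" "{s \<in> Ssub p. s \<in> len_vecs 2} \<subseteq> module.span smul BS"
    and B: "B \<subseteq> ?E" "B \<inter> BS = {}" "module.independent smul (B \<union> BS)"
      "?E \<subseteq> module.span smul (B \<union> BS)"
    by (rule fun_vector_space.obtain_complement_basis)
  have B_basis: "\<exists>m. b = basis_vec m \<and> valid_mon m \<and> mlen m = 2" if "b \<in> B" for b
    using that B(1) by blast
  have B_len: "B \<subseteq> len_vecs 2"
    using B_basis len_vecs_basis_vec by fastforce
  have "len_vecs 2 \<subseteq> module.span smul (B \<union> BS)"
    by (rule len_vecs_subset_span) (use B(4) in blast)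
  then have span: "Sprime_pre p \<subseteq> module.span smul ({Qseq p I b | I b. I \<subseteq> {0, 1} \<and> b \<in> B} \<union> Ssub p)"
    using Sprime_pre_spanned[OF assms(2) B_len] BS(1) by blast
  show ?thesis
    unfolding E1_free_def
  proof (intro exI[of _ B] conjI allI impI ballI span)
    show "B \<subseteq> Sprime_pre p"
      using B_len Qseq_len2_Sprime_pre[of _ "{}" p] by auto
  next
    fix b assume "b \<in> B"
    then show "homogeneous p b" using B_basis homogeneous_basis_vec by metis
  next
    fix c F x
    assume "finite F \<and> F \<subseteq> B \<times> Pow {0, 1} \<and>
      (\<Sum>(b, I)\<in>F. smul (c (b, I)) (Qseq p I b)) \<in> Ssub p" and "x \<in> F"
    then show "c x = 0"
      using Qseq_family_independent[OF assms B_len B(3,2) BS(2)] by blast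
  qed
qed

lemma two_neq_zero_mod_ring:
  assumes "CARD('p::prime_card) \<noteq> 2"
  shows "(2::'p mod_ring) \<noteq> 0"
proof
  assume "(2::'p mod_ring) = 0"
  then have "CARD('p) dvd 2" using of_nat_0_mod_ring_dvd[of 2] by simp
  then show False
    using assms dvd_imp_le[of "CARD('p)" 2] prime_ge_2_nat[OF prime_card[where 'a = 'p]] by simp
qed

theorem mainTheorem4:
  assumes "CARD('p::prime_card) \<noteq> 2"
  shows "margolis_trivial CARD('p) 0 (Sprime_pre CARD('p) :: (mon \<Rightarrow> 'p mod_ring) set) (Ssub CARD('p))
       \<and> margolis_trivial CARD('p) 1 (Sprime_pre CARD('p) :: (mon \<Rightarrow> 'p mod_ring) set) (Ssub CARD('p))
       \<and> E1_free CARD('p) (Sprime_pre CARD('p) :: (mon \<Rightarrow> 'p mod_ring) set) (Ssub CARD('p))"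
proof -
  have p2: "2 \<le> CARD('p)" by (rule prime_ge_2_nat[OF prime_card])
  have two: "(2::'p mod_ring) \<noteq> 0" by (rule two_neq_zero_mod_ring[OF assms])
  show ?thesis
    unfolding margolis_trivial_def
    using Sprime_pre_margolis_Q0[OF p2 two] Sprime_pre_margolis_Q1[OF p2 two]
      Sprime_pre_E1_free[OF p2 two] by blast
qed

end
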